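(* Let $(X,\oplus,\odot,d)$ be any one of the spaces listed in the context and $\|x\|_{\mathcal F}=d(\tilde0,x)$. (i) If $A:X\to\mathbb{R}$ is linear (i.e. $A(x\oplus y)=A(x)+A(y)$ and $A(\lambda\odot x)=\lambda A(x)$ for all $x,y\in X$, $\lambda\in\mathbb{R}$), then $A$ is continuous at $\tilde0$ if and only if there exists $M>0$ with $|A(x)|\le M\|x\|_{\mathcal F}$ for all $x\in X$. (ii) If $A:X\to X$ is linear (i.e. $A(x\oplus y)=A(x)\oplus A(y)$ and $A(\lambda\odot x)=\lambda\odot A(x)$ for all $x,y\in X$, $\lambda\in\mathbb{R}$), then $A$ is continuous at $\tilde0$ if and only if there exists $M>0$ with $\|A(x)\|_{\mathcal F}\le M\|x\|_{\mathcal F}$ for all $x\in X$.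
   Context: A fuzzy number is a function $u:\mathbb{R}\to[0,1]$ which is normal, fuzzy convex, upper semicontinuous, with $\overline{\{u>0\}}$ compact; $\mathbb{R}_{\mathcal F}$ is the set of fuzzy numbers. Level sets $[u]^r=[u_-(r),u_+(r)]$; $[u\oplus v]^r=[u]^r+[v]^r$, $[\lambda\odot u]^r=\lambda[u]^r$, $\tilde0=\chi_{\{0\}}$; $D(u,v)=\sup_{r\in[0,1]}\max\{|u_-(r)-v_-(r)|,|u_+(r)-v_+(r)|\}$. The admissible spaces $(X,\oplus,\odot,d)$ (operations pointwise/componentwise) are: $(\mathbb{R}_{\mathcal F},D)$; $C([a,b];\mathbb{R}_{\mathcal F})$ with $D^*(f,g)=\sup_xD(f(x),g(x))$; $L^p([a,b];\mathbb{R}_{\mathcal F})$, $1\le p<\infty$, with $D_p(f,g)=(\int_a^bD(f(x),g(x))^pdx)^{1/p}$; $C^p([a,b];\mathbb{R}_{\mathcal F})$, $p\in\mathbb{N}$ ($p$ times (Hukuhara or generalized, all of the same kind) differentiable with continuous $p$-th derivative) with $D_p^*(f,g)=\sum_{i=0}^pD^*(f^{(i)},g^{(i)})$; $l^p_{\mathbb{R}_{\mathcal F}}$ ($p\ge1$) with $\rho_p(x,y)=(\sum_nD(x_n,y_n)^p)^{1/p}$; $m_{\mathbb{R}_{\mathcal F}}$ (bounded sequences), $c_{\mathbb{R}_{\mathcal F}}$ (convergent sequences), $c^{\tilde0}_{\mathbb{R}_{\mathcal F}}$ (sequences tending to $\tilde0$) with $\mu(x,y)=\sup_nD(x_n,y_n)$;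 and finite Cartesian products of these with the max metric. *)

theory Defs
  imports "HOL-Analysis.Analysis"
begin

definition fuzzy_number :: "(real \<Rightarrow> real) \<Rightarrow> bool" where
  "fuzzy_number u \<longleftrightarrow>
     (\<forall>x. 0 \<le> u x \<and> u x \<le> 1) \<and>
     (\<exists>x. u x = 1) \<and>
     (\<forall>x y t. 0 \<le> t \<and> t \<le> 1 \<longrightarrow> min (u x) (u y) \<le> u (t * x + (1 - t) * y)) \<and>
     (\<forall>x. \<forall>e>0. \<exists>d>0. \<forall>y. \<bar>y - x\<bar> < d \<longrightarrow> u y < u x + e) \<and>
     compact (closure {x. u x > 0})"

definition level :: "(real \<Rightarrow> real) \<Rightarrow> real \<Rightarrow> real set" where
  "level u r = (if r = 0 then closure {x. u x > 0} else {x. u x \<ge> r})"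

definition lo :: "(real \<Rightarrow> real) \<Rightarrow> real \<Rightarrow> real" where
  "lo u r = Inf (level u r)"

definition up :: "(real \<Rightarrow> real) \<Rightarrow> real \<Rightarrow> real" where
  "up u r = Sup (level u r)"

definition fD :: "(real \<Rightarrow> real) \<Rightarrow> (real \<Rightarrow> real) \<Rightarrow> real" where
  "fD u v = (SUP r\<in>{0..1}. max \<bar>lo u r - lo v r\<bar> \<bar>up u r - up v r\<bar>)"

definition fzero :: "real \<Rightarrow> real" where
  "fzero = (\<lambda>x. if x = 0 then 1 else 0)"

text \<open>Addition by Zadeh's extension principle (equivalently [u+v]^r = [u]^r + [v]^r).\<close>
definition fadd :: "(real \<Rightarrow> real) \<Rightarrow> (real \<Rightarrow> real) \<Rightarrow> (real \<Rightarrow> real)" where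
  "fadd u v = (\<lambda>x. SUP y. min (u y) (v (x - y)))"

text \<open>Scalar multiplication (equivalently [c u]^r = c [u]^r).\<close>
definition fsmul :: "real \<Rightarrow> (real \<Rightarrow> real) \<Rightarrow> (real \<Rightarrow> real)" where
  "fsmul c u = (if c = 0 then fzero else (\<lambda>x. u (x / c)))"

text \<open>Elements of C([a,b]) etc. are functions real => fuzzy, normalised to the fuzzy
  zero outside [a,b].\<close>

definition fcont_space :: "real \<Rightarrow> real \<Rightarrow> (real \<Rightarrow> real \<Rightarrow> real) set" where
  "fcont_space a b = {f. (\<forall>x\<in>{a..b}. fuzzy_number (f x)) \<and> (\<forall>x. x \<notin> {a..b} \<longrightarrow> f x = fzero) \<and>
     (\<forall>x\<in>{a..b}. \<forall>e>0. \<exists>d>0. \<forall>y\<in>{a..b}. \<bar>y - x\<bar> < d \<longrightarrow> fD (f y) (f x) < e)}"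

definition fDstar :: "real \<Rightarrow> real \<Rightarrow> (real \<Rightarrow> real \<Rightarrow> real) \<Rightarrow> (real \<Rightarrow> real \<Rightarrow> real) \<Rightarrow> real" where
  "fDstar a b f g = (SUP x\<in>{a..b}. fD (f x) (g x))"

definition hdiff_exists :: "(real \<Rightarrow> real) \<Rightarrow> (real \<Rightarrow> real) \<Rightarrow> bool" where
  "hdiff_exists u v \<longleftrightarrow> (\<exists>w. fuzzy_number w \<and> u = fadd v w)"

definition hdiff :: "(real \<Rightarrow> real) \<Rightarrow> (real \<Rightarrow> real) \<Rightarrow> (real \<Rightarrow> real)" where
  "hdiff u v = (SOME w. fuzzy_number w \<and> u = fadd v w)"

definition rquot_ok :: "bool \<Rightarrow> (real \<Rightarrow> real \<Rightarrow> real) \<Rightarrow> real \<Rightarrow> real \<Rightarrow> bool" where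
  "rquot_ok s f x h = (if s then hdiff_exists (f (x + h)) (f x) else hdiff_exists (f x) (f (x + h)))"

definition rquot :: "bool \<Rightarrow> (real \<Rightarrow> real \<Rightarrow> real) \<Rightarrow> real \<Rightarrow> real \<Rightarrow> (real \<Rightarrow> real)" where
  "rquot s f x h = (if s then fsmul (1 / h) (hdiff (f (x + h)) (f x))
                         else fsmul (- 1 / h) (hdiff (f x) (f (x + h))))"

definition lquot_ok :: "bool \<Rightarrow> (real \<Rightarrow> real \<Rightarrow> real) \<Rightarrow> real \<Rightarrow> real \<Rightarrow> bool" where
  "lquot_ok s f x h = (if s then hdiff_exists (f x) (f (x - h)) else hdiff_exists (f (x - h)) (f x))"

definition lquot :: "bool \<Rightarrow> (real \<Rightarrow> real \<Rightarrow> real) \<Rightarrow> real \<Rightarrow> real \<Rightarrow> (real \<Rightarrow> real)" where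
  "lquot s f x h = (if s then fsmul (1 / h) (hdiff (f x) (f (x - h)))
                         else fsmul (- 1 / h) (hdiff (f (x - h)) (f x)))"

text \<open>f has derivative L at x (relative to [a,b], one-sided at the end points), using the
  quotient types s (right) and s' (left). (True,True) is the Hukuhara derivative; the four
  choices of (s,s') are the four cases of Bede--Gal generalized differentiability.\<close>
definition has_fderiv_case ::
  "bool \<Rightarrow> bool \<Rightarrow> real \<Rightarrow> real \<Rightarrow> (real \<Rightarrow> real \<Rightarrow> real) \<Rightarrow> (real \<Rightarrow> real) \<Rightarrow> real \<Rightarrow> bool" where
  "has_fderiv_case s s' a b f L x \<longleftrightarrow> fuzzy_number L \<and>
     (\<exists>d>0. \<forall>h. 0 < h \<and> h < d \<longrightarrow>
        (x + h \<le> b \<longrightarrow> rquot_ok s f x h) \<and> (a \<le> x - h \<longrightarrow> lquot_ok s' f x h)) \<and>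
     ((\<lambda>h. fD (rquot s f x h) L) \<longlongrightarrow> 0) (at 0 within {h. 0 < h \<and> x + h \<le> b}) \<and>
     ((\<lambda>h. fD (lquot s' f x h) L) \<longlongrightarrow> 0) (at 0 within {h. 0 < h \<and> a \<le> x - h})"

text \<open>Kind: True = Hukuhara differentiability, False = generalized differentiability.\<close>
definition has_fderiv :: "bool \<Rightarrow> real \<Rightarrow> real \<Rightarrow> (real \<Rightarrow> real \<Rightarrow> real) \<Rightarrow> (real \<Rightarrow> real) \<Rightarrow> real \<Rightarrow> bool" where
  "has_fderiv hk a b f L x \<longleftrightarrow>
     (if hk then has_fderiv_case True True a b f L x else (\<exists>s s'. has_fderiv_case s s' a b f L x))"

definition fderiv_fun :: "bool \<Rightarrow> real \<Rightarrow> real \<Rightarrow> (real \<Rightarrow> real \<Rightarrow> real) \<Rightarrow> (real \<Rightarrow> real \<Rightarrow> real)" where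
  "fderiv_fun hk a b f = (\<lambda>x. if x \<in> {a..b} then (SOME L. has_fderiv hk a b f L x) else fzero)"

definition fderivs :: "bool \<Rightarrow> real \<Rightarrow> real \<Rightarrow> nat \<Rightarrow> (real \<Rightarrow> real \<Rightarrow> real) \<Rightarrow> (real \<Rightarrow> real \<Rightarrow> real)" where
  "fderivs hk a b i f = (fderiv_fun hk a b ^^ i) f"

definition fCp_space :: "nat \<Rightarrow> bool \<Rightarrow> real \<Rightarrow> real \<Rightarrow> (real \<Rightarrow> real \<Rightarrow> real) set" where
  "fCp_space p hk a b = {f. f \<in> fcont_space a b \<and>
      (\<forall>i<p. \<forall>x\<in>{a..b}. \<exists>L. has_fderiv hk a b (fderivs hk a b i f) L x) \<and>
      fderivs hk a b p f \<in> fcont_space a b}"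

definition fDpstar :: "nat \<Rightarrow> bool \<Rightarrow> real \<Rightarrow> real \<Rightarrow> (real \<Rightarrow> real \<Rightarrow> real) \<Rightarrow> (real \<Rightarrow> real \<Rightarrow> real) \<Rightarrow> real" where
  "fDpstar p hk a b f g = (\<Sum>i\<le>p. fDstar a b (fderivs hk a b i f) (fderivs hk a b i g))"

definition fLp_fun :: "real \<Rightarrow> real \<Rightarrow> real \<Rightarrow> (real \<Rightarrow> real \<Rightarrow> real) set" where
  "fLp_fun a b p = {f. (\<forall>x\<in>{a..b}. fuzzy_number (f x)) \<and> (\<forall>x. x \<notin> {a..b} \<longrightarrow> f x = fzero) \<and>
      (\<forall>r\<in>{0..1}. (\<lambda>x. lo (f x) r) \<in> borel_measurable lborel \<and> (\<lambda>x. up (f x) r) \<in> borel_measurable lborel) \<and>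
      (\<integral>\<^sup>+ x. indicator {a..b} x * ennreal (fD (f x) fzero powr p) \<partial>lborel) < \<infinity>}"

definition fDp_fun :: "real \<Rightarrow> real \<Rightarrow> real \<Rightarrow> (real \<Rightarrow> real \<Rightarrow> real) \<Rightarrow> (real \<Rightarrow> real \<Rightarrow> real) \<Rightarrow> real" where
  "fDp_fun a b p f g =
     enn2real (\<integral>\<^sup>+ x. indicator {a..b} x * ennreal (fD (f x) (g x) powr p) \<partial>lborel) powr (1 / p)"

definition fLp_class :: "real \<Rightarrow> real \<Rightarrow> real \<Rightarrow> (real \<Rightarrow> real \<Rightarrow> real) \<Rightarrow> (real \<Rightarrow> real \<Rightarrow> real) set" where
  "fLp_class a b p f = {g \<in> fLp_fun a b p. AE x in lborel. x \<in> {a..b} \<longrightarrow> g x = f x}"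

definition fLp_space :: "real \<Rightarrow> real \<Rightarrow> real \<Rightarrow> (real \<Rightarrow> real \<Rightarrow> real) set set" where
  "fLp_space a b p = fLp_class a b p ` fLp_fun a b p"

definition rep :: "'a set \<Rightarrow> 'a" where
  "rep F = (SOME f. f \<in> F)"

definition flp_space :: "real \<Rightarrow> (nat \<Rightarrow> real \<Rightarrow> real) set" where
  "flp_space p = {x. (\<forall>n. fuzzy_number (x n)) \<and> summable (\<lambda>n. fD (x n) fzero powr p)}"

definition frho :: "real \<Rightarrow> (nat \<Rightarrow> real \<Rightarrow> real) \<Rightarrow> (nat \<Rightarrow> real \<Rightarrow> real) \<Rightarrow> real" where
  "frho p x y = (\<Sum>n. fD (x n) (y n) powr p) powr (1 / p)"

definition fm_space :: "(nat \<Rightarrow> real \<Rightarrow> real) set" where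
  "fm_space = {x. (\<forall>n. fuzzy_number (x n)) \<and> (\<exists>B. \<forall>n. fD (x n) fzero \<le> B)}"

definition fc_space :: "(nat \<Rightarrow> real \<Rightarrow> real) set" where
  "fc_space = {x. (\<forall>n. fuzzy_number (x n)) \<and>
      (\<exists>L. fuzzy_number L \<and> (\<lambda>n. fD (x n) L) \<longlonglongrightarrow> 0)}"

definition fc0_space :: "(nat \<Rightarrow> real \<Rightarrow> real) set" where
  "fc0_space = {x. (\<forall>n. fuzzy_number (x n)) \<and> (\<lambda>n. fD (x n) fzero) \<longlonglongrightarrow> 0}"

definition fmu :: "(nat \<Rightarrow> real \<Rightarrow> real) \<Rightarrow> (nat \<Rightarrow> real \<Rightarrow> real) \<Rightarrow> real" where
  "fmu x y = (SUP n. fD (x n) (y n))"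

datatype felem =
    FNum (fnum: "real \<Rightarrow> real")
  | FFun (ffun: "real \<Rightarrow> real \<Rightarrow> real")
  | FCls (fcls: "(real \<Rightarrow> real \<Rightarrow> real) set")
  | FSeq (fseq: "nat \<Rightarrow> real \<Rightarrow> real")

text \<open>Base spaces: R_F; C([a,b]); L^p([a,b]) (params a b p); C^p([a,b]) (params p, kind
  (True = Hukuhara, False = generalized), a, b); l^p; m; c; c^0.\<close>
datatype bspace =
    SpRF
  | SpC real real
  | SpLp real real real
  | SpCp nat bool real real
  | Splp real
  | Spm
  | Spc
  | Spc0

fun bvalid :: "bspace \<Rightarrow> bool" where
  "bvalid SpRF = True"
| "bvalid (SpC a b) = (a < b)"
| "bvalid (SpLp a b p) = (a < b \<and> 1 \<le> p)"
| "bvalid (SpCp p hk a b) = (a < b)"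
| "bvalid (Splp p) = (1 \<le> p)"
| "bvalid Spm = True"
| "bvalid Spc = True"
| "bvalid Spc0 = True"

fun bcarrier :: "bspace \<Rightarrow> felem set" where
  "bcarrier SpRF = FNum ` {u. fuzzy_number u}"
| "bcarrier (SpC a b) = FFun ` fcont_space a b"
| "bcarrier (SpLp a b p) = FCls ` fLp_space a b p"
| "bcarrier (SpCp p hk a b) = FFun ` fCp_space p hk a b"
| "bcarrier (Splp p) = FSeq ` flp_space p"
| "bcarrier Spm = FSeq ` fm_space"
| "bcarrier Spc = FSeq ` fc_space"
| "bcarrier Spc0 = FSeq ` fc0_space"

fun badd :: "bspace \<Rightarrow> felem \<Rightarrow> felem \<Rightarrow> felem" where
  "badd SpRF x y = FNum (fadd (fnum x) (fnum y))"
| "badd (SpC a b) x y = FFun (\<lambda>t. fadd (ffun x t) (ffun y t))"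
| "badd (SpLp a b p) x y = FCls (fLp_class a b p (\<lambda>t. fadd (rep (fcls x) t) (rep (fcls y) t)))"
| "badd (SpCp p hk a b) x y = FFun (\<lambda>t. fadd (ffun x t) (ffun y t))"
| "badd (Splp p) x y = FSeq (\<lambda>n. fadd (fseq x n) (fseq y n))"
| "badd Spm x y = FSeq (\<lambda>n. fadd (fseq x n) (fseq y n))"
| "badd Spc x y = FSeq (\<lambda>n. fadd (fseq x n) (fseq y n))"
| "badd Spc0 x y = FSeq (\<lambda>n. fadd (fseq x n) (fseq y n))"

fun bsmul :: "bspace \<Rightarrow> real \<Rightarrow> felem \<Rightarrow> felem" where
  "bsmul SpRF c x = FNum (fsmul c (fnum x))"
| "bsmul (SpC a b) c x = FFun (\<lambda>t. fsmul c (ffun x t))"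
| "bsmul (SpLp a b p) c x = FCls (fLp_class a b p (\<lambda>t. fsmul c (rep (fcls x) t)))"
| "bsmul (SpCp p hk a b) c x = FFun (\<lambda>t. fsmul c (ffun x t))"
| "bsmul (Splp p) c x = FSeq (\<lambda>n. fsmul c (fseq x n))"
| "bsmul Spm c x = FSeq (\<lambda>n. fsmul c (fseq x n))"
| "bsmul Spc c x = FSeq (\<lambda>n. fsmul c (fseq x n))"
| "bsmul Spc0 c x = FSeq (\<lambda>n. fsmul c (fseq x n))"

fun bzero :: "bspace \<Rightarrow> felem" where
  "bzero SpRF = FNum fzero"
| "bzero (SpC a b) = FFun (\<lambda>t. fzero)"
| "bzero (SpLp a b p) = FCls (fLp_class a b p (\<lambda>t. fzero))"
| "bzero (SpCp p hk a b) = FFun (\<lambda>t. fzero)"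
| "bzero (Splp p) = FSeq (\<lambda>n. fzero)"
| "bzero Spm = FSeq (\<lambda>n. fzero)"
| "bzero Spc = FSeq (\<lambda>n. fzero)"
| "bzero Spc0 = FSeq (\<lambda>n. fzero)"

fun bdist :: "bspace \<Rightarrow> felem \<Rightarrow> felem \<Rightarrow> real" where
  "bdist SpRF x y = fD (fnum x) (fnum y)"
| "bdist (SpC a b) x y = fDstar a b (ffun x) (ffun y)"
| "bdist (SpLp a b p) x y = fDp_fun a b p (rep (fcls x)) (rep (fcls y))"
| "bdist (SpCp p hk a b) x y = fDpstar p hk a b (ffun x) (ffun y)"
| "bdist (Splp p) x y = frho p (fseq x) (fseq y)"
| "bdist Spm x y = fmu (fseq x) (fseq y)"
| "bdist Spc x y = fmu (fseq x) (fseq y)"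
| "bdist Spc0 x y = fmu (fseq x) (fseq y)"

text \<open>An admissible space is a finite (nonempty) Cartesian product of base spaces, given by a
  list of base spaces; elements are lists of components; max metric.\<close>
definition valid_spec :: "bspace list \<Rightarrow> bool" where
  "valid_spec S \<longleftrightarrow> S \<noteq> [] \<and> (\<forall>b\<in>set S. bvalid b)"

definition Xcarrier :: "bspace list \<Rightarrow> felem list set" where
  "Xcarrier S = {xs. length xs = length S \<and> (\<forall>i<length S. xs ! i \<in> bcarrier (S ! i))}"

definition Xadd :: "bspace list \<Rightarrow> felem list \<Rightarrow> felem list \<Rightarrow> felem list" where
  "Xadd S xs ys = map (\<lambda>i. badd (S ! i) (xs ! i) (ys ! i)) [0..<length S]"

definition Xsmul :: "bspace list \<Rightarrow> real \<Rightarrow> felem list \<Rightarrow> felem list" where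
  "Xsmul S c xs = map (\<lambda>i. bsmul (S ! i) c (xs ! i)) [0..<length S]"

definition Xzero :: "bspace list \<Rightarrow> felem list" where
  "Xzero S = map bzero S"

definition Xdist :: "bspace list \<Rightarrow> felem list \<Rightarrow> felem list \<Rightarrow> real" where
  "Xdist S xs ys = Max ((\<lambda>i. bdist (S ! i) (xs ! i) (ys ! i)) ` {..<length S})"

definition Xnorm :: "bspace list \<Rightarrow> felem list \<Rightarrow> real" where
  "Xnorm S x = Xdist S (Xzero S) x"

definition lin_functional :: "bspace list \<Rightarrow> (felem list \<Rightarrow> real) \<Rightarrow> bool" where
  "lin_functional S A \<longleftrightarrow>
     (\<forall>x\<in>Xcarrier S. \<forall>y\<in>Xcarrier S. A (Xadd S x y) = A x + A y) \<and>
     (\<forall>c. \<forall>x\<in>Xcarrier S. A (Xsmul S c x) = c * A x)"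

definition lin_operator :: "bspace list \<Rightarrow> (felem list \<Rightarrow> felem list) \<Rightarrow> bool" where
  "lin_operator S A \<longleftrightarrow> (\<forall>x\<in>Xcarrier S. A x \<in> Xcarrier S) \<and>
     (\<forall>x\<in>Xcarrier S. \<forall>y\<in>Xcarrier S. A (Xadd S x y) = Xadd S (A x) (A y)) \<and>
     (\<forall>c. \<forall>x\<in>Xcarrier S. A (Xsmul S c x) = Xsmul S c (A x))"

definition cont0_functional :: "bspace list \<Rightarrow> (felem list \<Rightarrow> real) \<Rightarrow> bool" where
  "cont0_functional S A \<longleftrightarrow> (\<forall>e>0. \<exists>d>0. \<forall>x\<in>Xcarrier S.
      Xdist S (Xzero S) x < d \<longrightarrow> \<bar>A x - A (Xzero S)\<bar> < e)"

definition cont0_operator :: "bspace list \<Rightarrow> (felem list \<Rightarrow> felem list) \<Rightarrow> bool" where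
  "cont0_operator S A \<longleftrightarrow> (\<forall>e>0. \<exists>d>0. \<forall>x\<in>Xcarrier S.
      Xdist S (Xzero S) x < d \<longrightarrow> Xdist S (A (Xzero S)) (A x) < e)"

end

theory Submission
  imports Defs
begin

text \<open>Linearity makes \<open>A\<close> positively homogeneous, and in every admissible space positive
  scaling maps the space into itself and multiplies the norm \<open>d(0, x)\<close> by the scalar. For
  positively homogeneous maps, continuity at the origin and boundedness are equivalent by
  rescaling. The work is the homogeneity of the metrics: for \<open>C\<^sup>p\<close> the derivatives of
  \<open>c \<odot> f\<close> must be \<open>c \<odot>\<close> those of \<open>f\<close>, which rests on the uniqueness of generalized
  Hukuhara derivatives, and the intermediate derivatives must have finite sup-metric, which
  follows from the continuity of differentiable functions.\<close>

section \<open>Fuzzy numbers and their level sets\<close>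

lemma fuzzy_numberD:
  assumes "fuzzy_number u"
  shows "0 \<le> u x" "u x \<le> 1" "\<exists>x. u x = 1"
    "0 \<le> t \<Longrightarrow> t \<le> 1 \<Longrightarrow> min (u x) (u y) \<le> u (t * x + (1 - t) * y)"
    "e > 0 \<Longrightarrow> \<exists>d>0. \<forall>y. \<bar>y - x\<bar> < d \<longrightarrow> u y < u x + e"
    "compact (closure {x. u x > 0})"
  using assms unfolding fuzzy_number_def by blast+

lemma closed_superlevel:
  assumes "fuzzy_number u" shows "closed {x. r \<le> u x}"
proof -
  have "open {x. u x < r}"
    unfolding open_dist
  proof safe
    fix x assume "u x < r"
    then obtain d where "d > 0" "\<forall>y. \<bar>y - x\<bar> < d \<longrightarrow> u y < u x + (r - u x)"
      using fuzzy_numberD(5)[OF assms, of "r - u x" x] by auto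
    then show "\<exists>e>0. \<forall>y. dist y x < e \<longrightarrow> y \<in> {x. u x < r}"
      by (auto simp: dist_real_def)
  qed
  moreover have "{x. r \<le> u x} = - {x. u x < r}" by auto
  ultimately show ?thesis by (simp add: closed_def)
qed

lemma compact_level:
  assumes "fuzzy_number u" "r \<in> {0..1}" shows "compact (level u r)"
proof (cases "r = 0")
  case True then show ?thesis using fuzzy_numberD(6)[OF assms(1)] by (simp add: level_def)
next
  case False
  then have "level u r = closure {x. u x > 0} \<inter> {x. r \<le> u x}"
    using assms(2) closure_subset by (force simp: level_def)
  then show ?thesis
    using fuzzy_numberD(6)[OF assms(1)] closed_superlevel[OF assms(1)] by (simp add: compact_Int_closed)
qed

lemma level_nonempty:
  assumes "fuzzy_number u" "r \<in> {0..1}" shows "level u r \<noteq> {}"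
proof -
  obtain x where x: "u x = 1" using fuzzy_numberD(3)[OF assms(1)] by blast
  then have "x \<in> closure {x. u x > 0}" using closure_subset by fastforce
  then have "x \<in> level u r" using x assms(2) by (simp add: level_def)
  then show ?thesis by blast
qed

lemma level_subset_level_0:
  assumes "r \<in> {0..1}" shows "level u r \<subseteq> level u 0"
proof (cases "r = 0")
  case False
  then have "{x. r \<le> u x} \<subseteq> closure {x. 0 < u x}" using assms closure_subset by fastforce
  then show ?thesis using False by (simp add: level_def)
qed simp

lemma lo_up_level:
  assumes "fuzzy_number u" "r \<in> {0..1}"
  shows "lo u r \<in> level u r" "x \<in> level u r \<Longrightarrow> lo u r \<le> x"
    "up u r \<in> level u r" "x \<in> level u r \<Longrightarrow> x \<le> up u r"
proof -
  have "compact (level u r)" using compact_level[OF assms] .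
  then have bdd: "bdd_below (level u r)" "bdd_above (level u r)" and cl: "closed (level u r)"
    by (auto intro: bounded_imp_bdd_below bounded_imp_bdd_above compact_imp_bounded compact_imp_closed)
  note ne = level_nonempty[OF assms]
  show "lo u r \<in> level u r" unfolding lo_def by (rule closed_contains_Inf[OF ne bdd(1) cl])
  show "up u r \<in> level u r" unfolding up_def by (rule closed_contains_Sup[OF ne bdd(2) cl])
  show "x \<in> level u r \<Longrightarrow> lo u r \<le> x" unfolding lo_def by (rule cInf_lower[OF _ bdd(1)])
  show "x \<in> level u r \<Longrightarrow> x \<le> up u r" unfolding up_def by (rule cSup_upper[OF _ bdd(2)])
qed

lemma lo_up_mono:
  assumes "fuzzy_number u" "r \<in> {0..1}"
  shows "lo u 0 \<le> lo u r" "up u r \<le> up u 0" "lo u r \<le> up u r"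
proof -
  have "lo u r \<in> level u 0" "up u r \<in> level u 0"
    using lo_up_level(1,3)[OF assms] level_subset_level_0[OF assms(2)] by auto
  then show "lo u 0 \<le> lo u r" "up u r \<le> up u 0" "lo u r \<le> up u r"
    using lo_up_level[OF assms] lo_up_level(2,4)[OF assms(1), of 0] by auto
qed

lemma level_eq_interval:
  assumes "fuzzy_number u" "r \<in> {0<..1}"
  shows "level u r = {lo u r..up u r}"
proof
  have r: "r \<in> {0..1}" using assms by auto
  show "level u r \<subseteq> {lo u r..up u r}" using lo_up_level[OF assms(1) r] by auto
  show "{lo u r..up u r} \<subseteq> level u r"
  proof
    fix x assume x: "x \<in> {lo u r..up u r}"
    have ends: "r \<le> u (lo u r)" "r \<le> u (up u r)"
      using lo_up_level(1,3)[OF assms(1) r] assms(2) by (auto simp: level_def)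
    show "x \<in> level u r"
    proof (cases "lo u r = up u r")
      case True then show ?thesis using x lo_up_level(1)[OF assms(1) r] by auto
    next
      case False
      then have lt: "lo u r < up u r" using lo_up_mono(3)[OF assms(1) r] by auto
      define t where "t = (up u r - x) / (up u r - lo u r)"
      have t: "0 \<le> t" "t \<le> 1" using x lt by (auto simp: t_def field_simps)
      have "t * (up u r - lo u r) = up u r - x" using lt by (simp add: t_def)
      then have "t * lo u r + (1 - t) * up u r = x" by (simp add: algebra_simps)
      then have "min (u (lo u r)) (u (up u r)) \<le> u x"
        using fuzzy_numberD(4)[OF assms(1) t, of "lo u r" "up u r"] by simp
      then show ?thesis using ends assms(2) by (auto simp: level_def)
    qed
  qed
qed

lemma fuzzy_number_eqI:
  assumes "fuzzy_number u" "fuzzy_number v"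
    and "\<And>r. r \<in> {0<..1} \<Longrightarrow> lo u r = lo v r \<and> up u r = up v r"
  shows "u = v"
proof
  have sup_eq: "r \<le> u x \<longleftrightarrow> r \<le> v x" if "r \<in> {0<..1}" for r x
  proof -
    have "level u r = level v r"
      using level_eq_interval[OF assms(1) that] level_eq_interval[OF assms(2) that] assms(3)[OF that] by simp
    then show ?thesis using that by (auto simp: level_def)
  qed
  fix x
  have "u x \<le> v x" if "0 < u x" using sup_eq[of "u x" x] that fuzzy_numberD(2)[OF assms(1)] by auto
  moreover have "v x \<le> u x" if "0 < v x" using sup_eq[of "v x" x] that fuzzy_numberD(2)[OF assms(2)] by auto
  ultimately show "u x = v x" using fuzzy_numberD(1)[OF assms(1), of x] fuzzy_numberD(1)[OF assms(2), of x]
    by (cases "0 < u x"; cases "0 < v x") auto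
qed

lemma bdd_above_fD_levels:
  assumes "fuzzy_number u" "fuzzy_number v"
  shows "bdd_above ((\<lambda>r. max \<bar>lo u r - lo v r\<bar> \<bar>up u r - up v r\<bar>) ` {0..1})"
proof (rule bdd_aboveI2)
  fix r :: real assume r: "r \<in> {0..1}"
  show "max \<bar>lo u r - lo v r\<bar> \<bar>up u r - up v r\<bar> \<le> \<bar>lo u 0\<bar> + \<bar>up u 0\<bar> + \<bar>lo v 0\<bar> + \<bar>up v 0\<bar>"
    using lo_up_mono[OF assms(1) r] lo_up_mono[OF assms(2) r] by auto
qed

lemma fD_ge_level:
  assumes "fuzzy_number u" "fuzzy_number v" "r \<in> {0..1}"
  shows "\<bar>lo u r - lo v r\<bar> \<le> fD u v" "\<bar>up u r - up v r\<bar> \<le> fD u v"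
  using cSUP_upper[OF assms(3) bdd_above_fD_levels[OF assms(1,2)]] unfolding fD_def by auto

lemma fD_leI:
  assumes "\<And>r. r \<in> {0..1} \<Longrightarrow> \<bar>lo u r - lo v r\<bar> \<le> K \<and> \<bar>up u r - up v r\<bar> \<le> K"
  shows "fD u v \<le> K"
  unfolding fD_def by (rule cSUP_least) (use assms in auto)

lemma fD_nonneg: "fuzzy_number u \<Longrightarrow> fuzzy_number v \<Longrightarrow> 0 \<le> fD u v"
  using fD_ge_level(1)[of u v 0] by fastforce

lemma fD_commute: "fD u v = fD v u"
  unfolding fD_def by (simp add: abs_minus_commute)

lemma fD_self [simp]: "fD u u = 0"
  unfolding fD_def by simp

lemma fD_triangle:
  assumes "fuzzy_number u" "fuzzy_number v" "fuzzy_number w"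
  shows "fD u w \<le> fD u v + fD v w"
proof (rule fD_leI)
  fix r :: real assume r: "r \<in> {0..1}"
  show "\<bar>lo u r - lo w r\<bar> \<le> fD u v + fD v w \<and> \<bar>up u r - up w r\<bar> \<le> fD u v + fD v w"
    using fD_ge_level[OF assms(1,2) r] fD_ge_level[OF assms(2,3) r] by (intro conjI; linarith)
qed

lemma fD_le_0_imp_eq:
  assumes "fuzzy_number u" "fuzzy_number v" "fD u v \<le> 0"
  shows "u = v"
proof (rule fuzzy_number_eqI[OF assms(1,2)])
  fix r :: real assume "r \<in> {0<..1}"
  then have "r \<in> {0..1}" by auto
  from fD_ge_level[OF assms(1,2) this] assms(3)
  show "lo u r = lo v r \<and> up u r = up v r" by (intro conjI; linarith)
qed

lemma cSUP_mult_left_pos: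
  fixes f :: "'a \<Rightarrow> real"
  assumes "c > 0" "I \<noteq> {}" "bdd_above (f ` I)"
  shows "(SUP i\<in>I. c * f i) = c * (SUP i\<in>I. f i)"
proof -
  have "c * Sup (f ` I) = (SUP t\<in>f ` I. c * t)"
    by (rule continuous_at_Sup_mono)
       (use assms in \<open>auto simp: mono_def intro: mult_left_mono continuous_intros\<close>)
  then show ?thesis by (simp add: image_image)
qed

lemma fuzzy_number_fzero: "fuzzy_number fzero"
proof -
  have "{x. fzero x > 0} = {0}" by (auto simp: fzero_def)
  moreover have "\<exists>d>0. \<forall>y. \<bar>y - x\<bar> < d \<longrightarrow> fzero y < fzero x + e" if "e > 0" for x e :: real
  proof (cases "x = 0")
    case True then show ?thesis using that by (intro exI[of _ 1]) (auto simp: fzero_def)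
  next
    case False then show ?thesis using that by (intro exI[of _ "\<bar>x\<bar>"]) (auto simp: fzero_def)
  qed
  ultimately show ?thesis unfolding fuzzy_number_def by (auto simp: fzero_def)
qed

lemma level_fzero: "r \<in> {0..1} \<Longrightarrow> level fzero r = {0}"
  by (auto simp: level_def fzero_def)

lemma lo_up_fzero [simp]: "r \<in> {0..1} \<Longrightarrow> lo fzero r = 0" "r \<in> {0..1} \<Longrightarrow> up fzero r = 0"
  by (simp_all add: lo_def up_def level_fzero)

lemma fsmul_fzero [simp]: "fsmul c fzero = fzero"
  by (auto simp: fsmul_def fzero_def fun_eq_iff)

lemma fsmul_0 [simp]: "fsmul 0 u = fzero"
  by (simp add: fsmul_def)

lemma fsmul_commute: "fsmul a (fsmul b u) = fsmul b (fsmul a u)"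
  by (simp add: fsmul_def fzero_def fun_eq_iff divide_divide_eq_left mult.commute)

lemma scaling_image_eq:
  fixes c :: real
  assumes "c \<noteq> 0" shows "{x. P (x / c)} = (\<lambda>x. c * x) ` {x. P x}"
  using assms by (auto intro: image_eqI[of _ _ "_ / c"])

lemma level_fsmul:
  assumes "c \<noteq> 0" shows "level (fsmul c u) r = (\<lambda>x. c * x) ` level u r"
  using assms closure_scaleR[of c "{x. 0 < u x}"]
  by (simp add: level_def fsmul_def scaling_image_eq[where P="\<lambda>x. 0 < u x"]
      scaling_image_eq[where P="\<lambda>x. r \<le> u x"])

lemma fuzzy_number_fsmul:
  assumes "fuzzy_number u" shows "fuzzy_number (fsmul c u)"
proof (cases "c = 0")
  case True then show ?thesis by (simp add: fuzzy_number_fzero)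
next
  case c: False
  have f: "fsmul c u = (\<lambda>x. u (x / c))" using c by (simp add: fsmul_def)
  obtain x0 where "u x0 = 1" using fuzzy_numberD(3)[OF assms] by blast
  then have normal: "\<exists>x. u (x / c) = 1" using c by (intro exI[of _ "c * x0"]) simp
  have convex: "min (u (x / c)) (u (y / c)) \<le> u ((t * x + (1 - t) * y) / c)"
    if "0 \<le> t" "t \<le> 1" for x y t
    using fuzzy_numberD(4)[OF assms that, of "x / c" "y / c"] by (simp add: add_divide_distrib)
  have usc: "\<exists>d>0. \<forall>y. \<bar>y - x\<bar> < d \<longrightarrow> u (y / c) < u (x / c) + e" if e: "e > 0" for x e
  proof -
    obtain d where d: "d > 0" "\<forall>y. \<bar>y - x / c\<bar> < d \<longrightarrow> u y < u (x / c) + e"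
      using fuzzy_numberD(5)[OF assms e] by blast
    have "\<bar>y / c - x / c\<bar> < d" if "\<bar>y - x\<bar> < d * \<bar>c\<bar>" for y
      using that c by (simp add: diff_divide_distrib[symmetric] abs_divide pos_divide_less_eq)
    then show ?thesis using d c by (intro exI[of _ "d * \<bar>c\<bar>"]) auto
  qed
  have "closure {x. 0 < u (x / c)} = (\<lambda>x. c * x) ` closure {x. 0 < u x}"
    using c closure_scaleR[of c "{x. 0 < u x}"] by (simp add: scaling_image_eq[where P="\<lambda>x. 0 < u x"])
  then have "compact (closure {x. 0 < u (x / c)})"
    using compact_scaling[OF fuzzy_numberD(6)[OF assms], of c] by simp
  then show ?thesis
    unfolding f fuzzy_number_def using fuzzy_numberD(1,2)[OF assms] normal convex usc by blast
qed

lemma lo_up_fsmul_pos: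
  assumes "c > 0" "fuzzy_number u" "r \<in> {0..1}"
  shows "lo (fsmul c u) r = c * lo u r" "up (fsmul c u) r = c * up u r"
  unfolding lo_def up_def level_fsmul[of c, OF less_imp_neq[OF assms(1), symmetric]]
  using lo_up_level[OF assms(2,3)] assms(1)
  by (auto simp: lo_def up_def intro!: cInf_eq_minimum cSup_eq_maximum)

lemma lo_up_fsmul_neg:
  assumes "c < 0" "fuzzy_number u" "r \<in> {0..1}"
  shows "lo (fsmul c u) r = c * up u r" "up (fsmul c u) r = c * lo u r"
  unfolding lo_def up_def level_fsmul[of c, OF less_imp_neq[OF assms(1)]]
  using lo_up_level[OF assms(2,3)] assms(1)
  by (auto simp: lo_def up_def mult_left_mono_neg intro!: cInf_eq_minimum cSup_eq_maximum)

lemma fD_fsmul: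
  assumes "c > 0" "fuzzy_number u" "fuzzy_number v"
  shows "fD (fsmul c u) (fsmul c v) = c * fD u v"
proof -
  have "max \<bar>lo (fsmul c u) r - lo (fsmul c v) r\<bar> \<bar>up (fsmul c u) r - up (fsmul c v) r\<bar>
      = c * max \<bar>lo u r - lo v r\<bar> \<bar>up u r - up v r\<bar>" if r: "r \<in> {0..1}" for r
    using lo_up_fsmul_pos[OF assms(1,2) r] lo_up_fsmul_pos[OF assms(1,3) r] assms(1)
    by (simp add: right_diff_distrib[symmetric] abs_mult max_mult_distrib_left)
  then have "fD (fsmul c u) (fsmul c v) = (SUP r\<in>{0..1}. c * max \<bar>lo u r - lo v r\<bar> \<bar>up u r - up v r\<bar>)"
    unfolding fD_def by (intro SUP_cong) auto
  also have "\<dots> = c * fD u v"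
    unfolding fD_def by (rule cSUP_mult_left_pos[OF assms(1) _ bdd_above_fD_levels[OF assms(2,3)]]) simp
  finally show ?thesis .
qed

lemma fD_fsmul_fzero:
  assumes "fuzzy_number u" shows "fD (fsmul c u) fzero = \<bar>c\<bar> * fD u fzero"
proof (cases "c = 0")
  case False
  have "max \<bar>lo (fsmul c u) r - lo fzero r\<bar> \<bar>up (fsmul c u) r - up fzero r\<bar>
      = \<bar>c\<bar> * max \<bar>lo u r - lo fzero r\<bar> \<bar>up u r - up fzero r\<bar>" if r: "r \<in> {0..1}" for r
  proof (cases "c > 0")
    case True then show ?thesis using lo_up_fsmul_pos[OF True assms r] r by (simp add: abs_mult max_mult_distrib_left)
  next
    case neg: False
    then have "c < 0" using \<open>c \<noteq> 0\<close> by simp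
    then show ?thesis using lo_up_fsmul_neg[OF \<open>c < 0\<close> assms r] r
      by (simp add: abs_mult max_mult_distrib_left max.commute)
  qed
  then have "fD (fsmul c u) fzero = (SUP r\<in>{0..1}. \<bar>c\<bar> * max \<bar>lo u r - lo fzero r\<bar> \<bar>up u r - up fzero r\<bar>)"
    unfolding fD_def by (intro SUP_cong) auto
  also have "\<dots> = \<bar>c\<bar> * fD u fzero"
    unfolding fD_def using False
    by (intro cSUP_mult_left_pos bdd_above_fD_levels[OF assms fuzzy_number_fzero]) auto
  finally show ?thesis .
qed (simp add: fuzzy_number_fzero)


lemma fadd_fsmul:
  assumes "c \<noteq> 0" shows "fadd (fsmul c v) (fsmul c w) = fsmul c (fadd v w)"
proof
  fix x
  have "range (\<lambda>y. min (v (y / c)) (w ((x - y) / c))) = range (\<lambda>y. min (v y) (w (x / c - y)))"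
  proof safe
    fix y show "min (v (y / c)) (w ((x - y) / c)) \<in> range (\<lambda>y. min (v y) (w (x / c - y)))"
      by (rule image_eqI[of _ _ "y / c"]) (simp_all add: diff_divide_distrib)
  next
    fix y show "min (v y) (w (x / c - y)) \<in> range (\<lambda>y. min (v (y / c)) (w ((x - y) / c)))"
      by (rule image_eqI[of _ _ "c * y"]) (use assms in \<open>simp_all add: diff_divide_distrib\<close>)
  qed
  then show "fadd (fsmul c v) (fsmul c w) x = fsmul c (fadd v w) x"
    using assms by (simp add: fadd_def fsmul_def)
qed

lemma closure_sums_compact:
  fixes A B :: "'a::real_normed_vector set"
  assumes "compact (closure A)" "compact (closure B)"
  shows "closure {a + b | a b. a \<in> A \<and> b \<in> B} = {a + b | a b. a \<in> closure A \<and> b \<in> closure B}"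
proof
  have sums: "C + D = {a + b | a b. a \<in> C \<and> b \<in> D}" for C D :: "'a set"
    by (auto simp: set_plus_def)
  have "compact {a + b | a b. a \<in> closure A \<and> b \<in> closure B}" by (rule compact_sums[OF assms])
  then have "closed {a + b | a b. a \<in> closure A \<and> b \<in> closure B}" by (rule compact_imp_closed)
  moreover have "{a + b | a b. a \<in> A \<and> b \<in> B} \<subseteq> {a + b | a b. a \<in> closure A \<and> b \<in> closure B}"
    using closure_subset by blast
  ultimately show "closure {a + b | a b. a \<in> A \<and> b \<in> B} \<subseteq> {a + b | a b. a \<in> closure A \<and> b \<in> closure B}"
    by (rule closure_minimal[rotated])
  show "{a + b | a b. a \<in> closure A \<and> b \<in> closure B} \<subseteq> closure {a + b | a b. a \<in> A \<and> b \<in> B}"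
    using closure_sum[of A B] unfolding sums .
qed

lemma bdd_above_fadd: "fuzzy_number u \<Longrightarrow> bdd_above (range (\<lambda>y. min (u y) (v (x - y))))"
  using fuzzy_numberD(2) min.coboundedI1 by (intro bdd_aboveI2[of _ _ 1]) blast

lemma fadd_ge:
  assumes "fuzzy_number u" "r \<le> u a" "r \<le> v b" shows "r \<le> fadd u v (a + b)"
proof -
  have "min (u a) (v (a + b - a)) \<le> fadd u v (a + b)"
    unfolding fadd_def by (rule cSUP_upper[OF _ bdd_above_fadd[OF assms(1)]]) simp
  then show ?thesis using assms(2,3) by simp
qed

lemma compact_fadd_splittings:
  assumes "fuzzy_number u" "fuzzy_number v" "s \<in> {0<..1}"
  shows "compact ({y. s \<le> u y} \<inter> {y. s \<le> v (x - y)})"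
proof -
  have "closed ((\<lambda>y. x - y) -` {z. s \<le> v z})"
    by (rule continuous_closed_vimage[OF closed_superlevel[OF assms(2)]]) (intro continuous_intros)
  moreover have "compact {y. s \<le> u y}" using compact_level[OF assms(1), of s] assms(3) by (simp add: level_def)
  ultimately show ?thesis by (simp add: compact_Int_closed vimage_def)
qed

text \<open>The supremum defining \<open>fadd u v x\<close> is attained: the sets of near-optimal splittings
  \<open>x = y + (x - y)\<close> form a decreasing chain of nonempty compact sets.\<close>

lemma fadd_geE:
  assumes u: "fuzzy_number u" and v: "fuzzy_number v" and r: "0 < r" "r \<le> 1" "r \<le> fadd u v x"
  obtains y where "r \<le> u y" "r \<le> v (x - y)"
proof -
  define s where "s n = r - r / (2 * Suc n)" for n :: nat
  define K where "K n = {y. s n \<le> u y} \<inter> {y. s n \<le> v (x - y)}" for n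
  have s: "r / 2 \<le> s n" "s n < r" for n
    using r(1) by (auto simp: s_def field_simps)
  have ne: "K n \<noteq> {}" for n
  proof -
    have "s n < (SUP y. min (u y) (v (x - y)))" using s(2)[of n] r(3) by (simp add: fadd_def)
    then obtain y where "s n < min (u y) (v (x - y))"
      using less_cSUP_iff[OF _ bdd_above_fadd[OF u]] by blast
    then have "y \<in> K n" by (simp add: K_def)
    then show ?thesis by blast
  qed
  have mono: "K n \<subseteq> K m" if "m \<le> n" for m n
  proof -
    have "r / (2 * Suc n) \<le> r / (2 * Suc m)" using that r(1) by (intro divide_left_mono) auto
    then have "s m \<le> s n" by (simp add: s_def)
    then show ?thesis unfolding K_def by auto
  qed
  have "compact (K n)" for n
    unfolding K_def using s[of n] r(1,2) by (intro compact_fadd_splittings[OF u v]) auto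
  then have "\<Inter>(range K) \<noteq> {}" by (rule compact_nest[OF _ ne mono])
  then obtain y where y: "\<And>n. y \<in> K n" by blast
  have "r \<le> w" if w: "\<And>n. s n \<le> w" for w
  proof (rule field_le_epsilon)
    fix e :: real assume "0 < e"
    then obtain n where "1 / Suc n < e / r" using r(1) nat_approx_posE[of "e / r"] by auto
    then have "r / (2 * Suc n) < e" using r(1) by (simp add: field_simps)
    then show "r \<le> w + e" using w[of n] by (simp add: s_def)
  qed
  then have "r \<le> u y" "r \<le> v (x - y)" using y by (auto simp: K_def)
  then show ?thesis by (rule that)
qed

lemma fadd_superlevel:
  assumes "fuzzy_number u" "fuzzy_number v" "r \<in> {0<..1}"
  shows "{x. r \<le> fadd u v x} = {a + b | a b. r \<le> u a \<and> r \<le> v b}"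
proof safe
  fix x assume "r \<le> fadd u v x"
  moreover have "0 < r" "r \<le> 1" using assms(3) by auto
  ultimately obtain y where "r \<le> u y" "r \<le> v (x - y)" by (metis fadd_geE assms(1,2))
  then show "\<exists>a b. x = a + b \<and> r \<le> u a \<and> r \<le> v b" by (intro exI[of _ y] exI[of _ "x - y"]) simp
qed (use fadd_ge[OF assms(1)] in simp)

lemma fadd_support:
  assumes "fuzzy_number u"
  shows "{x. 0 < fadd u v x} = {a + b | a b. a \<in> {x. 0 < u x} \<and> b \<in> {x. 0 < v x}}"
proof safe
  fix x assume "0 < fadd u v x"
  then obtain y where "0 < min (u y) (v (x - y))"
    using less_cSUP_iff[OF _ bdd_above_fadd[OF assms]] by (auto simp: fadd_def)
  then show "\<exists>a b. x = a + b \<and> a \<in> {x. 0 < u x} \<and> b \<in> {x. 0 < v x}"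
    by (intro exI[of _ y] exI[of _ "x - y"]) simp
next
  fix a b assume "0 < u a" "0 < v b"
  then have "min (u a) (v b) \<le> fadd u v (a + b)" by (intro fadd_ge[OF assms]) auto
  then show "0 < fadd u v (a + b)" using \<open>0 < u a\<close> \<open>0 < v b\<close> by linarith
qed

lemma level_fadd:
  assumes "fuzzy_number u" "fuzzy_number v" "r \<in> {0..1}"
  shows "level (fadd u v) r = {a + b | a b. a \<in> level u r \<and> b \<in> level v r}"
proof (cases "r = 0")
  case True
  then show ?thesis
    using fadd_support[OF assms(1), of v]
      closure_sums_compact[OF fuzzy_numberD(6)[OF assms(1)] fuzzy_numberD(6)[OF assms(2)]]
    by (simp add: level_def)
next
  case False
  then have "r \<in> {0<..1}" using assms(3) by simp
  then show ?thesis using False fadd_superlevel[OF assms(1,2)] by (simp add: level_def)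
qed

lemma lo_up_fadd:
  assumes "fuzzy_number u" "fuzzy_number v" "r \<in> {0..1}"
  shows "lo (fadd u v) r = lo u r + lo v r" "up (fadd u v) r = up u r + up v r"
  unfolding lo_def[of "fadd u v"] up_def[of "fadd u v"] level_fadd[OF assms]
  using lo_up_level[OF assms(1,3)] lo_up_level[OF assms(2,3)]
  by (auto simp: lo_def up_def intro: add_mono intro!: cInf_eq_minimum cSup_eq_maximum)

lemma fadd_left_cancel:
  assumes "fuzzy_number v" "fuzzy_number w" "fuzzy_number w'" "fadd v w = fadd v w'"
  shows "w = w'"
  using lo_up_fadd[OF assms(1,2)] lo_up_fadd[OF assms(1,3)] assms(4)
  by (intro fuzzy_number_eqI[OF assms(2,3)]) auto

lemma fadd_fzero_fzero: "fadd fzero fzero = fzero"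
proof
  fix x
  show "fadd fzero fzero x = fzero x"
  proof (rule antisym)
    show "fadd fzero fzero x \<le> fzero x" unfolding fadd_def
      by (rule cSUP_least) (auto simp: fzero_def)
    show "fzero x \<le> fadd fzero fzero x"
      using fadd_ge[OF fuzzy_number_fzero, of "fzero x" 0 fzero x] by (simp add: fzero_def)
  qed
qed

lemma hdiff:
  assumes "hdiff_exists u v" shows "fuzzy_number (hdiff u v)" "u = fadd v (hdiff u v)"
proof -
  have "\<exists>w. fuzzy_number w \<and> u = fadd v w" using assms by (simp add: hdiff_exists_def)
  then have "fuzzy_number (hdiff u v) \<and> u = fadd v (hdiff u v)"
    unfolding hdiff_def by (rule someI_ex)
  then show "fuzzy_number (hdiff u v)" "u = fadd v (hdiff u v)" by simp_all
qed

lemma hdiff_eqI: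
  assumes "fuzzy_number v" "fuzzy_number w" "u = fadd v w" shows "hdiff u v = w"
proof -
  have "hdiff_exists u v" using assms by (auto simp: hdiff_exists_def)
  then show ?thesis using fadd_left_cancel[OF assms(1) hdiff(1) assms(2)] hdiff(2) assms(3) by simp
qed

lemma hdiff_fsmul:
  assumes "c \<noteq> 0" "fuzzy_number v" "hdiff_exists u v"
  shows "hdiff_exists (fsmul c u) (fsmul c v)" "hdiff (fsmul c u) (fsmul c v) = fsmul c (hdiff u v)"
proof -
  have eq: "fsmul c u = fadd (fsmul c v) (fsmul c (hdiff u v))"
    using hdiff(2)[OF assms(3)] fadd_fsmul[OF assms(1)] by simp
  have "fuzzy_number (fsmul c (hdiff u v))" by (rule fuzzy_number_fsmul[OF hdiff(1)[OF assms(3)]])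
  then show "hdiff_exists (fsmul c u) (fsmul c v)" "hdiff (fsmul c u) (fsmul c v) = fsmul c (hdiff u v)"
    using eq hdiff_eqI[OF fuzzy_number_fsmul[OF assms(2)]] by (auto simp: hdiff_exists_def)
qed

section \<open>Difference quotients and derivatives\<close>

abbreviation right_steps :: "real \<Rightarrow> real \<Rightarrow> real filter" where
  "right_steps x b \<equiv> at 0 within {h. 0 < h \<and> x + h \<le> b}"

abbreviation left_steps :: "real \<Rightarrow> real \<Rightarrow> real filter" where
  "left_steps a x \<equiv> at 0 within {h. 0 < h \<and> a \<le> x - h}"

abbreviation fsmul_fun :: "real \<Rightarrow> (real \<Rightarrow> real \<Rightarrow> real) \<Rightarrow> real \<Rightarrow> real \<Rightarrow> real" where
  "fsmul_fun c g \<equiv> \<lambda>t. fsmul c (g t)"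

lemma eventually_right_steps_iff:
  "(\<forall>\<^sub>F h in right_steps x b. P h) \<longleftrightarrow> (\<exists>d>0. \<forall>h. 0 < h \<longrightarrow> h < d \<longrightarrow> x + h \<le> b \<longrightarrow> P h)"
  unfolding eventually_at by (auto simp: dist_real_def)

lemma eventually_left_steps_iff:
  "(\<forall>\<^sub>F h in left_steps a x. P h) \<longleftrightarrow> (\<exists>d>0. \<forall>h. 0 < h \<longrightarrow> h < d \<longrightarrow> a \<le> x - h \<longrightarrow> P h)"
  unfolding eventually_at by (auto simp: dist_real_def)

lemma eventually_right_steps: "\<forall>\<^sub>F h in right_steps x b. 0 < h \<and> x + h \<le> b"
  by (auto simp: eventually_at_filter)

lemma eventually_left_steps: "\<forall>\<^sub>F h in left_steps a x. 0 < h \<and> a \<le> x - h"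
  by (auto simp: eventually_at_filter)

lemma right_steps_neq_bot:
  assumes "x < b" shows "right_steps x b \<noteq> bot"
proof -
  have "min (e / 2) (b - x) \<in> {h. 0 < h \<and> x + h \<le> b} \<and> min (e / 2) (b - x) \<noteq> 0
      \<and> dist (min (e / 2) (b - x)) 0 < e" if "e > 0" for e
    using that assms by (auto simp: dist_real_def)
  then have "(0::real) islimpt {h. 0 < h \<and> x + h \<le> b}" unfolding islimpt_approachable by blast
  then show ?thesis using trivial_limit_within by blast
qed

lemma left_steps_neq_bot:
  assumes "a < x" shows "left_steps a x \<noteq> bot"
proof -
  have "min (e / 2) (x - a) \<in> {h. 0 < h \<and> a \<le> x - h} \<and> min (e / 2) (x - a) \<noteq> 0
      \<and> dist (min (e / 2) (x - a)) 0 < e" if "e > 0" for e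
    using that assms by (auto simp: dist_real_def)
  then have "(0::real) islimpt {h. 0 < h \<and> a \<le> x - h}" unfolding islimpt_approachable by blast
  then show ?thesis using trivial_limit_within by blast
qed

lemma has_fderiv_case_iff:
  "has_fderiv_case s s' a b f L x \<longleftrightarrow> fuzzy_number L \<and>
     (\<forall>\<^sub>F h in right_steps x b. rquot_ok s f x h) \<and> (\<forall>\<^sub>F h in left_steps a x. lquot_ok s' f x h) \<and>
     ((\<lambda>h. fD (rquot s f x h) L) \<longlongrightarrow> 0) (right_steps x b) \<and>
     ((\<lambda>h. fD (lquot s' f x h) L) \<longlongrightarrow> 0) (left_steps a x)"
proof -
  have "(\<exists>d>0. \<forall>h. 0 < h \<and> h < d \<longrightarrow> (x + h \<le> b \<longrightarrow> rquot_ok s f x h) \<and> (a \<le> x - h \<longrightarrow> lquot_ok s' f x h))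
      \<longleftrightarrow> (\<forall>\<^sub>F h in right_steps x b. rquot_ok s f x h) \<and> (\<forall>\<^sub>F h in left_steps a x. lquot_ok s' f x h)"
    unfolding eventually_right_steps_iff eventually_left_steps_iff
  proof safe
    fix d1 d2 :: real
    assume "d1 > 0" "\<forall>h. 0 < h \<longrightarrow> h < d1 \<longrightarrow> x + h \<le> b \<longrightarrow> rquot_ok s f x h"
      and "d2 > 0" "\<forall>h. 0 < h \<longrightarrow> h < d2 \<longrightarrow> a \<le> x - h \<longrightarrow> lquot_ok s' f x h"
    then show "\<exists>d>0. \<forall>h. 0 < h \<and> h < d \<longrightarrow> (x + h \<le> b \<longrightarrow> rquot_ok s f x h) \<and> (a \<le> x - h \<longrightarrow> lquot_ok s' f x h)"
      by (intro exI[of _ "min d1 d2"]) auto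
  qed auto
  then show ?thesis unfolding has_fderiv_case_def by blast
qed

lemma fuzzy_number_rquot: "rquot_ok s g x h \<Longrightarrow> fuzzy_number (rquot s g x h)"
  by (cases s) (auto simp: rquot_ok_def rquot_def intro!: fuzzy_number_fsmul hdiff)

lemma fuzzy_number_lquot: "lquot_ok s g x h \<Longrightarrow> fuzzy_number (lquot s g x h)"
  by (cases s) (auto simp: lquot_ok_def lquot_def intro!: fuzzy_number_fsmul hdiff)

lemma rquot_fsmul_fun:
  assumes "c \<noteq> 0" "fuzzy_number (g x)" "fuzzy_number (g (x + h))" "rquot_ok s g x h"
  shows "rquot_ok s (fsmul_fun c g) x h" "rquot s (fsmul_fun c g) x h = fsmul c (rquot s g x h)"
  using assms hdiff_fsmul[OF assms(1)] fsmul_commute[of c]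
  by (cases s; simp add: rquot_ok_def rquot_def)+

lemma lquot_fsmul_fun:
  assumes "c \<noteq> 0" "fuzzy_number (g x)" "fuzzy_number (g (x - h))" "lquot_ok s g x h"
  shows "lquot_ok s (fsmul_fun c g) x h" "lquot s (fsmul_fun c g) x h = fsmul c (lquot s g x h)"
  using assms hdiff_fsmul[OF assms(1)] fsmul_commute[of c]
  by (cases s; simp add: lquot_ok_def lquot_def)+

lemma tendsto_fD_fsmul:
  assumes c: "c > 0" and L: "fuzzy_number L" and lim: "((\<lambda>h. fD (q h) L) \<longlongrightarrow> 0) F"
    and ev: "\<forall>\<^sub>F h in F. fuzzy_number (q h) \<and> q' h = fsmul c (q h)"
  shows "((\<lambda>h. fD (q' h) (fsmul c L)) \<longlongrightarrow> 0) F"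
proof (rule Lim_transform_eventually[OF tendsto_mult_right_zero[OF lim, of c]])
  show "\<forall>\<^sub>F h in F. c * fD (q h) L = fD (q' h) (fsmul c L)"
    using ev by eventually_elim (simp add: fD_fsmul[OF c _ L])
qed

lemma has_fderiv_case_fsmul:
  assumes c: "c > 0" and g: "\<And>t. t \<in> {a..b} \<Longrightarrow> fuzzy_number (g t)" and x: "x \<in> {a..b}"
    and D: "has_fderiv_case s s' a b g L x"
  shows "has_fderiv_case s s' a b (fsmul_fun c g) (fsmul c L) x"
proof -
  have L: "fuzzy_number L"
    and okR: "\<forall>\<^sub>F h in right_steps x b. rquot_ok s g x h"
    and okL: "\<forall>\<^sub>F h in left_steps a x. lquot_ok s' g x h"
    and limR: "((\<lambda>h. fD (rquot s g x h) L) \<longlongrightarrow> 0) (right_steps x b)"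
    and limL: "((\<lambda>h. fD (lquot s' g x h) L) \<longlongrightarrow> 0) (left_steps a x)"
    using D unfolding has_fderiv_case_iff by blast+
  have R: "\<forall>\<^sub>F h in right_steps x b. rquot_ok s (fsmul_fun c g) x h \<and> fuzzy_number (rquot s g x h)
      \<and> rquot s (fsmul_fun c g) x h = fsmul c (rquot s g x h)"
    using okR eventually_right_steps
  proof eventually_elim
    case (elim h)
    then have "fuzzy_number (g (x + h))" using g x by auto
    then show ?case using rquot_fsmul_fun[OF _ g[OF x] _ elim(1)] fuzzy_number_rquot[OF elim(1)] c by auto
  qed
  have Lf: "\<forall>\<^sub>F h in left_steps a x. lquot_ok s' (fsmul_fun c g) x h \<and> fuzzy_number (lquot s' g x h)
      \<and> lquot s' (fsmul_fun c g) x h = fsmul c (lquot s' g x h)"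
    using okL eventually_left_steps
  proof eventually_elim
    case (elim h)
    then have "fuzzy_number (g (x - h))" using g x by auto
    then show ?case using lquot_fsmul_fun[OF _ g[OF x] _ elim(1)] fuzzy_number_lquot[OF elim(1)] c by auto
  qed
  show ?thesis
    unfolding has_fderiv_case_iff
    using fuzzy_number_fsmul[OF L] R Lf
      tendsto_fD_fsmul[OF c L limR eventually_mono[OF R]] tendsto_fD_fsmul[OF c L limL eventually_mono[OF Lf]]
    by (auto elim: eventually_mono)
qed

lemma has_fderiv_fsmul:
  assumes "c > 0" "\<And>t. t \<in> {a..b} \<Longrightarrow> fuzzy_number (g t)" "x \<in> {a..b}" "has_fderiv hk a b g L x"
  shows "has_fderiv hk a b (fsmul_fun c g) (fsmul c L) x"
proof -
  have "has_fderiv_case s s' a b (fsmul_fun c g) (fsmul c L) x"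
    if "has_fderiv_case s s' a b g L x" for s s'
    by (rule has_fderiv_case_fsmul[OF assms(1) _ assms(3) that]) (rule assms(2))
  then show ?thesis using assms(4) unfolding has_fderiv_def by (cases hk) auto
qed

text \<open>If both Hukuhara differences \<open>u \<ominus> v\<close> and \<open>v \<ominus> u\<close> exist, they are crisp and opposite
  (levelwise \<open>lo w + lo w' = 0 = up w + up w'\<close> with \<open>lo \<le> up\<close> for both), so the two kinds of
  difference quotient agree wherever both are defined.\<close>

lemma opposite_hdiffs_fsmul_eq:
  assumes "fuzzy_number u" "fuzzy_number v" "fuzzy_number w" "fuzzy_number w'"
    and "u = fadd v w" "v = fadd u w'"
  shows "fsmul c w = fsmul (- c) w'"
proof -
  have pos: "fsmul c w = fsmul (- c) w'"
    if c: "c > 0" and fz: "fuzzy_number u" "fuzzy_number v" "fuzzy_number w" "fuzzy_number w'"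
      and eq: "u = fadd v w" "v = fadd u w'" for c u v w w'
  proof (rule fuzzy_number_eqI[OF fuzzy_number_fsmul[OF fz(3)] fuzzy_number_fsmul[OF fz(4)]])
    fix r :: real assume "r \<in> {0<..1}"
    then have r: "r \<in> {0..1}" by auto
    have "lo u r = lo v r + lo w r" "up u r = up v r + up w r"
      using lo_up_fadd[OF fz(2,3) r] unfolding eq(1)[symmetric] by simp_all
    moreover have "lo v r = lo u r + lo w' r" "up v r = up u r + up w' r"
      using lo_up_fadd[OF fz(1,4) r] unfolding eq(2)[symmetric] by simp_all
    ultimately have "lo w r = up w r" "up w' r = - up w r" "lo w' r = - lo w r"
      using lo_up_mono(3)[OF fz(3) r] lo_up_mono(3)[OF fz(4) r] by linarith+
    then show "lo (fsmul c w) r = lo (fsmul (- c) w') r \<and> up (fsmul c w) r = up (fsmul (- c) w') r"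
      using lo_up_fsmul_pos[OF c fz(3) r] lo_up_fsmul_neg[of "- c", OF _ fz(4) r] c by simp
  qed
  consider "c > 0" | "c = 0" | "c < 0" by linarith
  then show ?thesis
  proof cases
    case 1
    then show ?thesis by (rule pos[OF _ assms])
  next
    case 3
    then show ?thesis using pos[of "- c", OF _ assms(2,1,4,3,6,5)] by simp
  qed simp
qed

lemma rquot_eq:
  assumes "fuzzy_number (g x)" "fuzzy_number (g (x + h))" "rquot_ok s1 g x h" "rquot_ok s2 g x h"
  shows "rquot s1 g x h = rquot s2 g x h"
proof (cases "s1 = s2")
  case False
  then have "hdiff_exists (g (x + h)) (g x)" "hdiff_exists (g x) (g (x + h))"
    using assms(3,4) by (cases s1; simp add: rquot_ok_def)+
  from opposite_hdiffs_fsmul_eq[OF assms(2,1) this[THEN hdiff(1)] this[THEN hdiff(2)], of "1 / h"]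
  show ?thesis using False by (cases s1; cases s2) (simp_all add: rquot_def)
qed simp

lemma lquot_eq:
  assumes "fuzzy_number (g x)" "fuzzy_number (g (x - h))" "lquot_ok s1 g x h" "lquot_ok s2 g x h"
  shows "lquot s1 g x h = lquot s2 g x h"
proof (cases "s1 = s2")
  case False
  then have "hdiff_exists (g x) (g (x - h))" "hdiff_exists (g (x - h)) (g x)"
    using assms(3,4) by (cases s1; simp add: lquot_ok_def)+
  from opposite_hdiffs_fsmul_eq[OF assms(1,2) this[THEN hdiff(1)] this[THEN hdiff(2)], of "1 / h"]
  show ?thesis using False by (cases s1; cases s2) (simp_all add: lquot_def)
qed simp

lemma fD_tendsto_unique:
  assumes F: "F \<noteq> bot" and L: "fuzzy_number L" "fuzzy_number L'"
    and ev: "\<forall>\<^sub>F h in F. fuzzy_number (q h) \<and> q' h = q h"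
    and lim: "((\<lambda>h. fD (q h) L) \<longlongrightarrow> 0) F" "((\<lambda>h. fD (q' h) L') \<longlongrightarrow> 0) F"
  shows "L = L'"
proof (rule fD_le_0_imp_eq[OF L])
  have "\<forall>\<^sub>F h in F. fD L L' \<le> fD (q h) L + fD (q' h) L'"
    using ev by eventually_elim (metis L fD_commute fD_triangle)
  moreover have "((\<lambda>h. fD (q h) L + fD (q' h) L') \<longlongrightarrow> 0) F"
    using tendsto_add[OF lim] by simp
  ultimately show "fD L L' \<le> 0" using tendsto_le[OF F _ tendsto_const] by blast
qed

lemma has_fderiv_case_unique:
  assumes ab: "a < b" and g: "\<And>t. t \<in> {a..b} \<Longrightarrow> fuzzy_number (g t)" and x: "x \<in> {a..b}"
    and D1: "has_fderiv_case s1 s1' a b g L x" and D2: "has_fderiv_case s2 s2' a b g L' x"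
  shows "L = L'"
proof -
  note D = D1[unfolded has_fderiv_case_iff] D2[unfolded has_fderiv_case_iff]
  show ?thesis
  proof (cases "x < b")
    case True
    have "\<forall>\<^sub>F h in right_steps x b. fuzzy_number (rquot s1 g x h) \<and> rquot s2 g x h = rquot s1 g x h"
      using D(1)[THEN conjunct2, THEN conjunct1] D(2)[THEN conjunct2, THEN conjunct1] eventually_right_steps
    proof eventually_elim
      case (elim h)
      then have "fuzzy_number (g (x + h))" using g x by auto
      then show ?case using rquot_eq[of g x h s2 s1] g[OF x] fuzzy_number_rquot elim by metis
    qed
    then show ?thesis using fD_tendsto_unique[OF right_steps_neq_bot[OF True]] D by blast
  next
    case False
    then have "a < x" using x ab by auto
    have "\<forall>\<^sub>F h in left_steps a x. fuzzy_number (lquot s1' g x h) \<and> lquot s2' g x h = lquot s1' g x h"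
      using D(1)[THEN conjunct2, THEN conjunct2, THEN conjunct1]
        D(2)[THEN conjunct2, THEN conjunct2, THEN conjunct1] eventually_left_steps
    proof eventually_elim
      case (elim h)
      then have "fuzzy_number (g (x - h))" using g x by auto
      then show ?case using lquot_eq[of g x h s2' s1'] g[OF x] fuzzy_number_lquot elim by metis
    qed
    then show ?thesis using fD_tendsto_unique[OF left_steps_neq_bot[OF \<open>a < x\<close>]] D by blast
  qed
qed

lemma has_fderiv_unique:
  assumes "a < b" "\<And>t. t \<in> {a..b} \<Longrightarrow> fuzzy_number (g t)" "x \<in> {a..b}"
    and "has_fderiv hk a b g L x" "has_fderiv hk a b g L' x"
  shows "L = L'"
  using assms(4,5) has_fderiv_case_unique[OF assms(1-3)] unfolding has_fderiv_def by (cases hk) auto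

lemma fuzzy_number_has_fderiv: "has_fderiv hk a b g L x \<Longrightarrow> fuzzy_number L"
  unfolding has_fderiv_def has_fderiv_case_def by (cases hk) auto

lemma fD_fadd_left:
  assumes "fuzzy_number v" "fuzzy_number w" shows "fD (fadd v w) v = fD w fzero"
  unfolding fD_def using lo_up_fadd[OF assms] by (intro SUP_cong) simp_all

lemma fD_rquot:
  assumes "fuzzy_number (g x)" "fuzzy_number (g (x + h))" "h > 0" "rquot_ok s g x h"
  shows "fD (g (x + h)) (g x) = h * fD (rquot s g x h) fzero"
proof (cases s)
  case True
  then have ex: "hdiff_exists (g (x + h)) (g x)" using assms(4) by (simp add: rquot_ok_def)
  have "fD (g (x + h)) (g x) = fD (hdiff (g (x + h)) (g x)) fzero"
    using fD_fadd_left[OF assms(1) hdiff(1)[OF ex]] hdiff(2)[OF ex] by simp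
  then show ?thesis using True assms(3) by (simp add: rquot_def fD_fsmul_fzero[OF hdiff(1)[OF ex]])
next
  case False
  then have ex: "hdiff_exists (g x) (g (x + h))" using assms(4) by (simp add: rquot_ok_def)
  have "fD (g (x + h)) (g x) = fD (hdiff (g x) (g (x + h))) fzero"
    using fD_fadd_left[OF assms(2) hdiff(1)[OF ex]] hdiff(2)[OF ex] fD_commute by metis
  then show ?thesis using False assms(3) by (simp add: rquot_def fD_fsmul_fzero[OF hdiff(1)[OF ex]])
qed

lemma fD_lquot:
  assumes "fuzzy_number (g x)" "fuzzy_number (g (x - h))" "h > 0" "lquot_ok s g x h"
  shows "fD (g x) (g (x - h)) = h * fD (lquot s g x h) fzero"
proof (cases s)
  case True
  then have ex: "hdiff_exists (g x) (g (x - h))" using assms(4) by (simp add: lquot_ok_def)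
  have "fD (g x) (g (x - h)) = fD (hdiff (g x) (g (x - h))) fzero"
    using fD_fadd_left[OF assms(2) hdiff(1)[OF ex]] hdiff(2)[OF ex] by simp
  then show ?thesis using True assms(3) by (simp add: lquot_def fD_fsmul_fzero[OF hdiff(1)[OF ex]])
next
  case False
  then have ex: "hdiff_exists (g (x - h)) (g x)" using assms(4) by (simp add: lquot_ok_def)
  have "fD (g x) (g (x - h)) = fD (hdiff (g (x - h)) (g x)) fzero"
    using fD_fadd_left[OF assms(1) hdiff(1)[OF ex]] hdiff(2)[OF ex] fD_commute by metis
  then show ?thesis using False assms(3) by (simp add: lquot_def fD_fsmul_fzero[OF hdiff(1)[OF ex]])
qed

text \<open>Convergent difference quotients stay bounded, so the increments \<open>h * fD (q h) fzero\<close>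
  tend to zero.\<close>

lemma eventually_increment_less:
  assumes L: "fuzzy_number L" and lim: "((\<lambda>h. fD (q h) L) \<longlongrightarrow> 0) F" and h0: "((\<lambda>h. h) \<longlongrightarrow> 0) F"
    and ev: "\<forall>\<^sub>F h in F. fuzzy_number (q h) \<and> 0 < h \<and> \<delta> h = h * fD (q h) fzero"
    and e: "e > 0"
  shows "\<forall>\<^sub>F h in F. \<delta> h < e"
proof -
  define K where "K = 1 + fD L fzero"
  have K: "K > 0" using fD_nonneg[OF L fuzzy_number_fzero] by (simp add: K_def)
  have "\<forall>\<^sub>F h in F. fD (q h) L < 1" using order_tendstoD(2)[OF lim] by simp
  moreover have "\<forall>\<^sub>F h in F. h < e / K" using order_tendstoD(2)[OF h0] e K by simp
  ultimately show ?thesis using ev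
  proof eventually_elim
    case (elim h)
    have "fD (q h) fzero \<le> fD (q h) L + fD L fzero"
      using fD_triangle[of "q h" L fzero] elim L fuzzy_number_fzero by blast
    then have "\<delta> h \<le> h * K" using elim by (simp add: K_def mult_left_mono)
    also have "\<dots> < e" using elim K by (simp add: pos_less_divide_eq)
    finally show ?case .
  qed
qed

definition fuzzy_continuous_on :: "real \<Rightarrow> real \<Rightarrow> (real \<Rightarrow> real \<Rightarrow> real) \<Rightarrow> bool" where
  "fuzzy_continuous_on a b G \<longleftrightarrow>
     (\<forall>x\<in>{a..b}. \<forall>e>0. \<exists>d>0. \<forall>y\<in>{a..b}. \<bar>y - x\<bar> < d \<longrightarrow> fD (G y) (G x) < e)"

lemma fcont_space_iff:
  "f \<in> fcont_space a b \<longleftrightarrow>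
     (\<forall>x\<in>{a..b}. fuzzy_number (f x)) \<and> (\<forall>x. x \<notin> {a..b} \<longrightarrow> f x = fzero) \<and> fuzzy_continuous_on a b f"
  unfolding fcont_space_def fuzzy_continuous_on_def by blast

lemma has_fderiv_case_increments_small:
  assumes g: "\<And>t. t \<in> {a..b} \<Longrightarrow> fuzzy_number (g t)" and x: "x \<in> {a..b}"
    and D: "has_fderiv_case s s' a b g L x" and e: "e > 0"
  shows "\<forall>\<^sub>F h in right_steps x b. fD (g (x + h)) (g x) < e"
    and "\<forall>\<^sub>F h in left_steps a x. fD (g x) (g (x - h)) < e"
proof -
  have L: "fuzzy_number L"
    and okR: "\<forall>\<^sub>F h in right_steps x b. rquot_ok s g x h"
    and okL: "\<forall>\<^sub>F h in left_steps a x. lquot_ok s' g x h"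
    and limR: "((\<lambda>h. fD (rquot s g x h) L) \<longlongrightarrow> 0) (right_steps x b)"
    and limL: "((\<lambda>h. fD (lquot s' g x h) L) \<longlongrightarrow> 0) (left_steps a x)"
    using D unfolding has_fderiv_case_iff by blast+
  show "\<forall>\<^sub>F h in right_steps x b. fD (g (x + h)) (g x) < e"
  proof (rule eventually_increment_less[OF L limR tendsto_ident_at _ e])
    show "\<forall>\<^sub>F h in right_steps x b. fuzzy_number (rquot s g x h) \<and> 0 < h \<and>
        fD (g (x + h)) (g x) = h * fD (rquot s g x h) fzero"
      using okR eventually_right_steps
    proof eventually_elim
      case (elim h)
      then have "fuzzy_number (g (x + h))" using g x by auto
      then show ?case using fD_rquot[of g x h s] g[OF x] fuzzy_number_rquot elim by auto
    qed
  qed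
  show "\<forall>\<^sub>F h in left_steps a x. fD (g x) (g (x - h)) < e"
  proof (rule eventually_increment_less[OF L limL tendsto_ident_at _ e])
    show "\<forall>\<^sub>F h in left_steps a x. fuzzy_number (lquot s' g x h) \<and> 0 < h \<and>
        fD (g x) (g (x - h)) = h * fD (lquot s' g x h) fzero"
      using okL eventually_left_steps
    proof eventually_elim
      case (elim h)
      then have "fuzzy_number (g (x - h))" using g x by auto
      then show ?case using fD_lquot[of g x h s'] g[OF x] fuzzy_number_lquot elim by auto
    qed
  qed
qed

lemma has_fderiv_case_continuous:
  assumes g: "\<And>t. t \<in> {a..b} \<Longrightarrow> fuzzy_number (g t)" and x: "x \<in> {a..b}"
    and D: "has_fderiv_case s s' a b g L x" and e: "e > 0"
  shows "\<exists>d>0. \<forall>y\<in>{a..b}. \<bar>y - x\<bar> < d \<longrightarrow> fD (g y) (g x) < e"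
proof -
  obtain d1 where d1: "d1 > 0" "\<And>h. 0 < h \<Longrightarrow> h < d1 \<Longrightarrow> x + h \<le> b \<Longrightarrow> fD (g (x + h)) (g x) < e"
    using has_fderiv_case_increments_small(1)[OF assms] unfolding eventually_right_steps_iff by blast
  obtain d2 where d2: "d2 > 0" "\<And>h. 0 < h \<Longrightarrow> h < d2 \<Longrightarrow> a \<le> x - h \<Longrightarrow> fD (g x) (g (x - h)) < e"
    using has_fderiv_case_increments_small(2)[OF assms] unfolding eventually_left_steps_iff by blast
  have "fD (g y) (g x) < e" if y: "y \<in> {a..b}" "\<bar>y - x\<bar> < min d1 d2" for y
  proof -
    consider "y = x" | "x < y" | "y < x" by linarith
    then show ?thesis
    proof cases
      case 2 then show ?thesis using d1(2)[of "y - x"] y by auto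
    next
      case 3 then show ?thesis using d2(2)[of "x - y"] y fD_commute by auto
    qed (use e in simp)
  qed
  then show ?thesis using d1(1) d2(1) by (intro exI[of _ "min d1 d2"]) auto
qed

lemma fuzzy_continuous_on_if_differentiable:
  assumes "\<And>t. t \<in> {a..b} \<Longrightarrow> fuzzy_number (g t)"
    and "\<And>x. x \<in> {a..b} \<Longrightarrow> \<exists>L. has_fderiv hk a b g L x"
  shows "fuzzy_continuous_on a b g"
  unfolding fuzzy_continuous_on_def
proof (intro ballI allI impI)
  fix x e :: real assume "x \<in> {a..b}" "e > 0"
  then obtain L s s' where "has_fderiv_case s s' a b g L x"
    using assms(2) unfolding has_fderiv_def by (metis (full_types))
  from has_fderiv_case_continuous[OF assms(1) \<open>x \<in> {a..b}\<close> this \<open>e > 0\<close>]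
  show "\<exists>d>0. \<forall>y\<in>{a..b}. \<bar>y - x\<bar> < d \<longrightarrow> fD (g y) (g x) < e" .
qed

lemma bdd_above_fD_fzero_if_continuous:
  assumes g: "\<And>t. t \<in> {a..b} \<Longrightarrow> fuzzy_number (G t)" and C: "fuzzy_continuous_on a b G"
  shows "bdd_above ((\<lambda>t. fD fzero (G t)) ` {a..b})"
proof -
  have "continuous_on {a..b} (\<lambda>t. fD fzero (G t))"
    unfolding continuous_on_iff
  proof (intro ballI allI impI)
    fix x e :: real assume x: "x \<in> {a..b}" and e: "e > 0"
    obtain d where d: "d > 0" "\<forall>y\<in>{a..b}. \<bar>y - x\<bar> < d \<longrightarrow> fD (G y) (G x) < e"
      using C x e unfolding fuzzy_continuous_on_def by blast
    have "dist (fD fzero (G y)) (fD fzero (G x)) < e" if y: "y \<in> {a..b}" "dist y x < d" for y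
      using fD_triangle[OF fuzzy_number_fzero g[OF x] g[OF y(1)]]
        fD_triangle[OF fuzzy_number_fzero g[OF y(1)] g[OF x]] fD_commute[of "G x" "G y"] d y
      by (auto simp: dist_real_def abs_less_iff)
    then show "\<exists>d>0. \<forall>y\<in>{a..b}. dist y x < d \<longrightarrow> dist (fD fzero (G y)) (fD fzero (G x)) < e"
      using d(1) by blast
  qed
  then have "compact ((\<lambda>t. fD fzero (G t)) ` {a..b})" by (rule compact_continuous_image[OF _ compact_Icc])
  then show ?thesis by (intro bounded_imp_bdd_above compact_imp_bounded)
qed

section \<open>The spaces \<open>C([a,b])\<close> and \<open>C\<^sup>p([a,b])\<close>\<close>

lemma fuzzy_continuous_on_fsmul:
  assumes c: "c > 0" and g: "\<And>t. t \<in> {a..b} \<Longrightarrow> fuzzy_number (G t)" and C: "fuzzy_continuous_on a b G"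
  shows "fuzzy_continuous_on a b (fsmul_fun c G)"
  unfolding fuzzy_continuous_on_def
proof (intro ballI allI impI)
  fix x e :: real assume x: "x \<in> {a..b}" and e: "e > 0"
  have "e / c > 0" using e c by simp
  then obtain d where d: "d > 0" "\<forall>y\<in>{a..b}. \<bar>y - x\<bar> < d \<longrightarrow> fD (G y) (G x) < e / c"
    using C x unfolding fuzzy_continuous_on_def by blast
  have "fD (fsmul c (G y)) (fsmul c (G x)) < e" if "y \<in> {a..b}" "\<bar>y - x\<bar> < d" for y
    using d(2) that fD_fsmul[OF c g[OF that(1)] g[OF x]] c by (simp add: pos_less_divide_eq mult.commute)
  then show "\<exists>d>0. \<forall>y\<in>{a..b}. \<bar>y - x\<bar> < d \<longrightarrow> fD (fsmul c (G y)) (fsmul c (G x)) < e"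
    using d(1) by blast
qed

lemma fcont_space_fsmul:
  assumes "c > 0" "f \<in> fcont_space a b" shows "fsmul_fun c f \<in> fcont_space a b"
  using assms fuzzy_continuous_on_fsmul[OF assms(1)] fuzzy_number_fsmul
  unfolding fcont_space_iff by auto

lemma fDstar_fzero_fsmul:
  assumes ab: "a < b" and c: "c > 0" and g: "\<And>t. t \<in> {a..b} \<Longrightarrow> fuzzy_number (G t)"
    and C: "fuzzy_continuous_on a b G"
  shows "fDstar a b (\<lambda>t. fzero) (fsmul_fun c G) = c * fDstar a b (\<lambda>t. fzero) G"
    and "0 \<le> fDstar a b (\<lambda>t. fzero) G"
proof -
  note bdd = bdd_above_fD_fzero_if_continuous[OF g C]
  have "fDstar a b (\<lambda>t. fzero) (fsmul_fun c G) = (SUP t\<in>{a..b}. c * fD fzero (G t))"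
    unfolding fDstar_def using fD_fsmul_fzero g c by (intro SUP_cong) (simp_all add: fD_commute)
  also have "\<dots> = c * fDstar a b (\<lambda>t. fzero) G"
    unfolding fDstar_def by (rule cSUP_mult_left_pos[OF c _ bdd]) (use ab in simp)
  finally show "fDstar a b (\<lambda>t. fzero) (fsmul_fun c G) = c * fDstar a b (\<lambda>t. fzero) G" .
  have "fD fzero (G a) \<le> fDstar a b (\<lambda>t. fzero) G"
    unfolding fDstar_def by (rule cSUP_upper[OF _ bdd]) (use ab in simp)
  moreover have "0 \<le> fD fzero (G a)" using fD_nonneg[OF fuzzy_number_fzero g] ab by simp
  ultimately show "0 \<le> fDstar a b (\<lambda>t. fzero) G" by linarith
qed

lemma fderivs_0 [simp]: "fderivs hk a b 0 f = f"
  by (simp add: fderivs_def)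

lemma fderivs_Suc [simp]: "fderivs hk a b (Suc i) f = fderiv_fun hk a b (fderivs hk a b i f)"
  by (simp add: fderivs_def)

lemma fderiv_fun_eqI:
  assumes "a < b" "\<And>t. t \<in> {a..b} \<Longrightarrow> fuzzy_number (G t)" "t \<in> {a..b}" "has_fderiv hk a b G L t"
  shows "fderiv_fun hk a b G t = L"
  using assms has_fderiv_unique[OF assms(1,2,3)] by (auto simp: fderiv_fun_def intro!: some_equality)

lemma has_fderiv_fderiv_fun:
  assumes "t \<in> {a..b}" "\<exists>L. has_fderiv hk a b G L t"
  shows "has_fderiv hk a b G (fderiv_fun hk a b G t) t"
  using someI_ex[OF assms(2)] assms(1) by (simp add: fderiv_fun_def)

lemma fderiv_fun_fsmul:
  assumes ab: "a < b" and c: "c > 0" and g: "\<And>t. t \<in> {a..b} \<Longrightarrow> fuzzy_number (G t)"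
    and D: "\<And>x. x \<in> {a..b} \<Longrightarrow> \<exists>L. has_fderiv hk a b G L x"
  shows "fderiv_fun hk a b (fsmul_fun c G) = fsmul_fun c (fderiv_fun hk a b G)"
proof
  fix t
  show "fderiv_fun hk a b (fsmul_fun c G) t = fsmul c (fderiv_fun hk a b G t)"
  proof (cases "t \<in> {a..b}")
    case True
    have "has_fderiv hk a b (fsmul_fun c G) (fsmul c (fderiv_fun hk a b G t)) t"
      by (rule has_fderiv_fsmul[OF c _ True has_fderiv_fderiv_fun[OF True D[OF True]]]) (rule g)
    then show ?thesis using fuzzy_number_fsmul[OF g] by (intro fderiv_fun_eqI[OF ab _ True]) auto
  next
    case False
    then show ?thesis by (simp add: fderiv_fun_def del: atLeastAtMost_iff)
  qed
qed

lemma fuzzy_number_fderivs: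
  assumes f: "f \<in> fCp_space p hk a b" and "i \<le> p" "t \<in> {a..b}"
  shows "fuzzy_number (fderivs hk a b i f t)"
  using assms(2,3)
proof (induction i arbitrary: t)
  case 0 then show ?case using f by (simp add: fCp_space_def fcont_space_def)
next
  case (Suc i)
  have "\<exists>L. has_fderiv hk a b (fderivs hk a b i f) L t" using f Suc.prems by (simp add: fCp_space_def)
  then show ?case using fuzzy_number_has_fderiv[OF has_fderiv_fderiv_fun[OF Suc.prems(2)]] by simp
qed

lemma fuzzy_continuous_on_fderivs:
  assumes f: "f \<in> fCp_space p hk a b" and i: "i \<le> p"
  shows "fuzzy_continuous_on a b (fderivs hk a b i f)"
proof (cases "i = p")
  case True then show ?thesis using f by (simp add: fCp_space_def fcont_space_iff)
next
  case False
  then show ?thesis using f i fuzzy_number_fderivs[OF f i]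
    by (intro fuzzy_continuous_on_if_differentiable[of a b _ hk]) (auto simp: fCp_space_def)
qed

lemma fderivs_fsmul:
  assumes f: "f \<in> fCp_space p hk a b" and ab: "a < b" and c: "c > 0" and "i \<le> p"
  shows "fderivs hk a b i (fsmul_fun c f) = fsmul_fun c (fderivs hk a b i f)"
  using assms(4)
proof (induction i)
  case (Suc i)
  have D: "\<And>x. x \<in> {a..b} \<Longrightarrow> \<exists>L. has_fderiv hk a b (fderivs hk a b i f) L x"
    using f Suc.prems by (simp add: fCp_space_def)
  show ?case using Suc fderiv_fun_fsmul[OF ab c fuzzy_number_fderivs[OF f] D] by simp
qed simp

lemma fCp_space_fsmul:
  assumes ab: "a < b" and c: "c > 0" and f: "f \<in> fCp_space p hk a b"
  shows "fsmul_fun c f \<in> fCp_space p hk a b"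
proof -
  have "\<exists>L. has_fderiv hk a b (fderivs hk a b i (fsmul_fun c f)) L x" if i: "i < p" and x: "x \<in> {a..b}" for i x
  proof -
    obtain L where "has_fderiv hk a b (fderivs hk a b i f) L x" using f i x unfolding fCp_space_def by blast
    then have "has_fderiv hk a b (fsmul_fun c (fderivs hk a b i f)) (fsmul c L) x"
      using i x by (intro has_fderiv_fsmul[OF c fuzzy_number_fderivs[OF f]]) auto
    then show ?thesis using fderivs_fsmul[OF f ab c] i by auto
  qed
  then show ?thesis
    using f fcont_space_fsmul[OF c] fderivs_fsmul[OF f ab c, of p] unfolding fCp_space_def by auto
qed

lemma fderivs_fzero:
  assumes "a < b" shows "fderivs hk a b i (\<lambda>t. fzero) = (\<lambda>t. fzero)"
proof (induction i)
  case (Suc i)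
  have "hdiff fzero fzero = fzero" "hdiff_exists fzero fzero"
    using hdiff_eqI[OF fuzzy_number_fzero fuzzy_number_fzero fadd_fzero_fzero[symmetric]]
      fuzzy_number_fzero fadd_fzero_fzero by (auto simp: hdiff_exists_def)
  then have "has_fderiv_case True True a b (\<lambda>t. fzero) fzero x" for x
    unfolding has_fderiv_case_def
    by (auto simp: rquot_ok_def lquot_ok_def rquot_def lquot_def fuzzy_number_fzero intro!: exI[of _ 1])
  then have "has_fderiv hk a b (\<lambda>t. fzero) fzero x" for x
    unfolding has_fderiv_def by (cases hk) auto
  then have "fderiv_fun hk a b (\<lambda>t. fzero) = (\<lambda>t. fzero)"
    using fderiv_fun_eqI[OF assms] fuzzy_number_fzero by (auto simp: fderiv_fun_def fun_eq_iff)
  then show ?case using Suc by simp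
qed simp

lemma fDpstar_fzero_fsmul:
  assumes ab: "a < b" and c: "c > 0" and f: "f \<in> fCp_space p hk a b"
  shows "fDpstar p hk a b (\<lambda>t. fzero) (fsmul_fun c f) = c * fDpstar p hk a b (\<lambda>t. fzero) f"
    and "0 \<le> fDpstar p hk a b (\<lambda>t. fzero) f"
proof -
  note S = fDstar_fzero_fsmul[OF ab c fuzzy_number_fderivs[OF f] fuzzy_continuous_on_fderivs[OF f]]
  show "fDpstar p hk a b (\<lambda>t. fzero) (fsmul_fun c f) = c * fDpstar p hk a b (\<lambda>t. fzero) f"
    unfolding fDpstar_def fderivs_fzero[OF ab] sum_distrib_left
    using S(1) fderivs_fsmul[OF f ab c] by (intro sum.cong) auto
  show "0 \<le> fDpstar p hk a b (\<lambda>t. fzero) f"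
    unfolding fDpstar_def fderivs_fzero[OF ab] using S(2) by (intro sum_nonneg) auto
qed

section \<open>The space \<open>L\<^sup>p([a,b])\<close>\<close>

lemma cmult_nn_integral_le: "c * integral\<^sup>N M f \<le> (\<integral>\<^sup>+x. c * f x \<partial>M)"
proof -
  have "c * integral\<^sup>N M f = (SUP g\<in>{g. simple_function M g \<and> g \<le> f}. c * integral\<^sup>S M g)"
    unfolding nn_integral_def by (simp add: SUP_mult_left_ennreal)
  also have "\<dots> \<le> (\<integral>\<^sup>+x. c * f x \<partial>M)"
  proof (rule SUP_least)
    fix g assume "g \<in> {g. simple_function M g \<and> g \<le> f}"
    then have g: "simple_function M g" "g \<le> f" by auto
    have "c * integral\<^sup>S M g = (\<integral>\<^sup>+x. c * g x \<partial>M)"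
      using g(1) by (simp add: simple_integral_mult nn_integral_eq_simple_integral simple_function_mult)
    also have "\<dots> \<le> (\<integral>\<^sup>+x. c * f x \<partial>M)"
      by (rule nn_integral_mono) (use g(2) in \<open>auto simp: le_fun_def intro: mult_left_mono\<close>)
    finally show "c * integral\<^sup>S M g \<le> (\<integral>\<^sup>+x. c * f x \<partial>M)" .
  qed
  finally show ?thesis .
qed

text \<open>Unlike \<open>nn_integral_cmult\<close>, no measurability is needed: nothing is known about the
  measurability of \<open>x \<mapsto> fD (f x) fzero\<close> for \<open>f \<in> fLp_fun a b p\<close>.\<close>

lemma nn_integral_cmult_pos:
  fixes k :: real
  assumes k: "k > 0"
  shows "(\<integral>\<^sup>+x. ennreal k * f x \<partial>M) = ennreal k * integral\<^sup>N M f"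
proof (rule antisym[OF _ cmult_nn_integral_le])
  have inv: "ennreal (1 / k) * ennreal k = 1" using k by (simp add: ennreal_mult[symmetric])
  have "ennreal (1 / k) * (\<integral>\<^sup>+x. ennreal k * f x \<partial>M) \<le> (\<integral>\<^sup>+x. ennreal (1 / k) * (ennreal k * f x) \<partial>M)"
    by (rule cmult_nn_integral_le)
  also have "\<dots> = integral\<^sup>N M f" by (simp add: mult.assoc[symmetric] inv)
  finally have "ennreal k * (ennreal (1 / k) * (\<integral>\<^sup>+x. ennreal k * f x \<partial>M)) \<le> ennreal k * integral\<^sup>N M f"
    by (rule mult_left_mono) simp
  then show "(\<integral>\<^sup>+x. ennreal k * f x \<partial>M) \<le> ennreal k * integral\<^sup>N M f"
    by (simp add: mult.assoc[symmetric] inv mult.commute[of "ennreal k"])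
qed

lemma powr_scale_root:
  fixes c p t :: real
  assumes "c > 0" "p \<ge> 1" "t \<ge> 0"
  shows "(c powr p * t) powr (1 / p) = c * t powr (1 / p)"
  using assms by (simp add: powr_mult powr_powr)

definition fLp_norm :: "real \<Rightarrow> real \<Rightarrow> real \<Rightarrow> (real \<Rightarrow> real \<Rightarrow> real) \<Rightarrow> real" where
  "fLp_norm a b p g =
     enn2real (\<integral>\<^sup>+ x. indicator {a..b} x * ennreal (fD fzero (g x) powr p) \<partial>lborel) powr (1 / p)"

lemma fuzzy_number_fLp_fun: "g \<in> fLp_fun a b p \<Longrightarrow> fuzzy_number (g x)"
  unfolding fLp_fun_def by (cases "x \<in> {a..b}") (auto simp: fuzzy_number_fzero)

lemma rep_fLp_class:
  assumes "g \<in> fLp_fun a b p"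
  shows "rep (fLp_class a b p g) \<in> fLp_fun a b p"
    and "AE x in lborel. x \<in> {a..b} \<longrightarrow> rep (fLp_class a b p g) x = g x"
proof -
  have "g \<in> fLp_class a b p g" using assms by (simp add: fLp_class_def)
  then have "rep (fLp_class a b p g) \<in> fLp_class a b p g"
    unfolding rep_def by (rule someI[where P = "\<lambda>f. f \<in> fLp_class a b p g"])
  then show "rep (fLp_class a b p g) \<in> fLp_fun a b p"
    and "AE x in lborel. x \<in> {a..b} \<longrightarrow> rep (fLp_class a b p g) x = g x"
    unfolding fLp_class_def by auto
qed

lemma rep_mem_fLp_fun: "X \<in> fLp_space a b p \<Longrightarrow> rep X \<in> fLp_fun a b p"
  using rep_fLp_class(1) by (auto simp: fLp_space_def)

lemma fzero_fLp_fun: "(\<lambda>t. fzero) \<in> fLp_fun a b p"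
  unfolding fLp_fun_def by (simp add: fuzzy_number_fzero)

lemma fLp_norm_cong_AE:
  assumes "AE x in lborel. x \<in> {a..b} \<longrightarrow> g x = g' x"
  shows "fLp_norm a b p g = fLp_norm a b p g'"
proof -
  have "(\<integral>\<^sup>+ x. indicator {a..b} x * ennreal (fD fzero (g x) powr p) \<partial>lborel)
      = (\<integral>\<^sup>+ x. indicator {a..b} x * ennreal (fD fzero (g' x) powr p) \<partial>lborel)"
    by (rule nn_integral_cong_AE) (use assms in \<open>eventually_elim, auto simp: indicator_def\<close>)
  then show ?thesis by (simp add: fLp_norm_def)
qed

lemma fDp_fun_fzero_class:
  "fDp_fun a b p (rep (fLp_class a b p (\<lambda>t. fzero))) g = fLp_norm a b p g"
proof -
  have "(\<integral>\<^sup>+ x. indicator {a..b} x * ennreal (fD (rep (fLp_class a b p (\<lambda>t. fzero)) x) (g x) powr p) \<partial>lborel)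
      = (\<integral>\<^sup>+ x. indicator {a..b} x * ennreal (fD fzero (g x) powr p) \<partial>lborel)"
    by (rule nn_integral_cong_AE)
      (use rep_fLp_class(2)[OF fzero_fLp_fun, of a b p] in \<open>eventually_elim, auto simp: indicator_def\<close>)
  then show ?thesis by (simp add: fLp_norm_def fDp_fun_def)
qed

lemma nn_integral_fD_fsmul_powr:
  assumes c: "c > 0" and g: "\<And>x. fuzzy_number (g x)"
  shows "(\<integral>\<^sup>+ x. indicator A x * ennreal (fD (fsmul c (g x)) fzero powr p) \<partial>lborel)
      = ennreal (c powr p) * (\<integral>\<^sup>+ x. indicator A x * ennreal (fD (g x) fzero powr p) \<partial>lborel)"
proof -
  have "indicator A x * ennreal (fD (fsmul c (g x)) fzero powr p)
      = ennreal (c powr p) * (indicator A x * ennreal (fD (g x) fzero powr p))" for x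
    using fD_fsmul_fzero[OF g] fD_nonneg[OF g fuzzy_number_fzero] c by (simp add: powr_mult ennreal_mult ac_simps)
  then show ?thesis using c by (simp add: nn_integral_cmult_pos)
qed

lemma fLp_fun_fsmul:
  assumes c: "c > 0" and g: "g \<in> fLp_fun a b p"
  shows "fsmul_fun c g \<in> fLp_fun a b p"
proof -
  have fz: "\<And>x. fuzzy_number (g x)" using fuzzy_number_fLp_fun[OF g] .
  have "(\<lambda>x. lo (fsmul c (g x)) r) = (\<lambda>x. c * lo (g x) r)" "(\<lambda>x. up (fsmul c (g x)) r) = (\<lambda>x. c * up (g x) r)"
    if "r \<in> {0..1}" for r
    using lo_up_fsmul_pos[OF c fz that] by auto
  then have "(\<lambda>x. lo (fsmul c (g x)) r) \<in> borel_measurable lborel \<and> (\<lambda>x. up (fsmul c (g x)) r) \<in> borel_measurable lborel"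
    if "r \<in> {0..1}" for r
    using g that by (auto simp: fLp_fun_def intro!: borel_measurable_times)
  moreover have "(\<integral>\<^sup>+ x. indicator {a..b} x * ennreal (fD (fsmul c (g x)) fzero powr p) \<partial>lborel) < \<infinity>"
    using g nn_integral_fD_fsmul_powr[of c g, OF c fz] by (simp add: fLp_fun_def ennreal_mult_less_top)
  ultimately show ?thesis using g fuzzy_number_fsmul[OF fz] unfolding fLp_fun_def by auto
qed

lemma fLp_norm_fsmul:
  assumes c: "c > 0" and p: "1 \<le> p" and g: "g \<in> fLp_fun a b p"
  shows "fLp_norm a b p (fsmul_fun c g) = c * fLp_norm a b p g"
proof -
  have fz: "\<And>x. fuzzy_number (g x)" using fuzzy_number_fLp_fun[OF g] .
  have "fLp_norm a b p (fsmul_fun c g)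
      = (c powr p * enn2real (\<integral>\<^sup>+ x. indicator {a..b} x * ennreal (fD fzero (g x) powr p) \<partial>lborel)) powr (1 / p)"
    using nn_integral_fD_fsmul_powr[of c g, OF c fz, where A = "{a..b}" and p = p]
    by (simp add: fLp_norm_def fD_commute[of fzero] enn2real_mult)
  also have "\<dots> = c * fLp_norm a b p g" unfolding fLp_norm_def by (rule powr_scale_root[OF c p]) simp
  finally show ?thesis .
qed

lemma fLp_space_fsmul:
  assumes c: "c > 0" and p: "1 \<le> p" and X: "X \<in> fLp_space a b p"
  defines "X' \<equiv> fLp_class a b p (fsmul_fun c (rep X))"
  shows "X' \<in> fLp_space a b p"
    and "fDp_fun a b p (rep (fLp_class a b p (\<lambda>t. fzero))) (rep X')
       = c * fDp_fun a b p (rep (fLp_class a b p (\<lambda>t. fzero))) (rep X)"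
proof -
  have r: "fsmul_fun c (rep X) \<in> fLp_fun a b p" by (rule fLp_fun_fsmul[OF c rep_mem_fLp_fun[OF X]])
  then show "X' \<in> fLp_space a b p" by (simp add: fLp_space_def X'_def)
  show "fDp_fun a b p (rep (fLp_class a b p (\<lambda>t. fzero))) (rep X')
       = c * fDp_fun a b p (rep (fLp_class a b p (\<lambda>t. fzero))) (rep X)"
    unfolding fDp_fun_fzero_class X'_def
    using fLp_norm_cong_AE[OF rep_fLp_class(2)[OF r]] fLp_norm_fsmul[OF c p rep_mem_fLp_fun[OF X]] by simp
qed

section \<open>Sequence spaces\<close>

lemma fmu_fzero_fsmul:
  assumes c: "c > 0" and x: "\<And>n. fuzzy_number (x n)" and B: "bdd_above (range (\<lambda>n. fD (x n) fzero))"
  shows "fmu (\<lambda>n. fzero) (\<lambda>n. fsmul c (x n)) = c * fmu (\<lambda>n. fzero) x"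
    and "0 \<le> fmu (\<lambda>n. fzero) x"
proof -
  have "fmu (\<lambda>n. fzero) (\<lambda>n. fsmul c (x n)) = (SUP n. c * fD (x n) fzero)"
    unfolding fmu_def using fD_fsmul_fzero[OF x] c by (simp add: fD_commute[of fzero])
  also have "\<dots> = c * fmu (\<lambda>n. fzero) x"
    unfolding fmu_def fD_commute[of fzero] by (rule cSUP_mult_left_pos[OF c _ B]) simp
  finally show "fmu (\<lambda>n. fzero) (\<lambda>n. fsmul c (x n)) = c * fmu (\<lambda>n. fzero) x" .
  have "fD (x 0) fzero \<le> fmu (\<lambda>n. fzero) x"
    unfolding fmu_def fD_commute[of fzero] by (rule cSUP_upper[OF _ B]) simp
  then show "0 \<le> fmu (\<lambda>n. fzero) x" using fD_nonneg[OF x fuzzy_number_fzero, of 0] by linarith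
qed

lemma fm_space_fsmul:
  assumes c: "c > 0" and x: "x \<in> fm_space"
  shows "(\<lambda>n. fsmul c (x n)) \<in> fm_space"
    and "bdd_above (range (\<lambda>n. fD (x n) fzero))"
proof -
  have fz: "\<And>n. fuzzy_number (x n)" using x by (simp add: fm_space_def)
  obtain B where B: "\<And>n. fD (x n) fzero \<le> B" using x by (auto simp: fm_space_def)
  then show "bdd_above (range (\<lambda>n. fD (x n) fzero))" by (intro bdd_aboveI2)
  have "fD (fsmul c (x n)) fzero \<le> c * B" for n using B[of n] fD_fsmul_fzero[OF fz] c by simp
  then show "(\<lambda>n. fsmul c (x n)) \<in> fm_space" using fuzzy_number_fsmul[OF fz] by (auto simp: fm_space_def)
qed

lemma fc_space_fsmul:
  assumes c: "c > 0" and x: "x \<in> fc_space"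
  shows "(\<lambda>n. fsmul c (x n)) \<in> fc_space"
    and "bdd_above (range (\<lambda>n. fD (x n) fzero))"
proof -
  have fz: "\<And>n. fuzzy_number (x n)" using x by (simp add: fc_space_def)
  obtain L where L: "fuzzy_number L" "(\<lambda>n. fD (x n) L) \<longlonglongrightarrow> 0" using x by (auto simp: fc_space_def)
  obtain K where K: "\<And>n. fD (x n) L \<le> K"
    using Bseq_bdd_above[OF convergent_imp_Bseq[OF convergentI[OF L(2)]]] by (auto simp: bdd_above_def)
  have "fD (x n) fzero \<le> K + fD L fzero" for n
    using fD_triangle[OF fz L(1) fuzzy_number_fzero, of n] K[of n] by linarith
  then show "bdd_above (range (\<lambda>n. fD (x n) fzero))" by (intro bdd_aboveI2)
  have "(\<lambda>n. c * fD (x n) L) \<longlonglongrightarrow> 0" by (rule tendsto_mult_right_zero[OF L(2)])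
  then have "(\<lambda>n. fD (fsmul c (x n)) (fsmul c L)) \<longlonglongrightarrow> 0" using fD_fsmul[OF c fz L(1)] by simp
  then show "(\<lambda>n. fsmul c (x n)) \<in> fc_space"
    using fuzzy_number_fsmul[OF fz] fuzzy_number_fsmul[OF L(1)] by (auto simp: fc_space_def)
qed

lemma fc0_space_fsmul:
  assumes c: "c > 0" and x: "x \<in> fc0_space"
  shows "(\<lambda>n. fsmul c (x n)) \<in> fc0_space"
    and "bdd_above (range (\<lambda>n. fD (x n) fzero))"
proof -
  have fz: "\<And>n. fuzzy_number (x n)" and L: "(\<lambda>n. fD (x n) fzero) \<longlonglongrightarrow> 0"
    using x by (auto simp: fc0_space_def)
  show "bdd_above (range (\<lambda>n. fD (x n) fzero))"
    by (rule Bseq_bdd_above[OF convergent_imp_Bseq[OF convergentI[OF L]]])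
  have "(\<lambda>n. c * fD (x n) fzero) \<longlonglongrightarrow> 0" by (rule tendsto_mult_right_zero[OF L])
  then have "(\<lambda>n. fD (fsmul c (x n)) fzero) \<longlonglongrightarrow> 0" using fD_fsmul_fzero[OF fz] c by simp
  then show "(\<lambda>n. fsmul c (x n)) \<in> fc0_space" using fuzzy_number_fsmul[OF fz] by (auto simp: fc0_space_def)
qed

lemma flp_space_fsmul:
  assumes c: "c > 0" and p: "1 \<le> p" and x: "x \<in> flp_space p"
  shows "(\<lambda>n. fsmul c (x n)) \<in> flp_space p"
    and "frho p (\<lambda>n. fzero) (\<lambda>n. fsmul c (x n)) = c * frho p (\<lambda>n. fzero) x"
proof -
  have fz: "\<And>n. fuzzy_number (x n)" and S: "summable (\<lambda>n. fD (x n) fzero powr p)"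
    using x by (auto simp: flp_space_def)
  have e: "fD (fsmul c (x n)) fzero powr p = c powr p * fD (x n) fzero powr p" for n
    using fD_fsmul_fzero[OF fz] fD_nonneg[OF fz fuzzy_number_fzero] c by (simp add: powr_mult)
  have "summable (\<lambda>n. fD (fsmul c (x n)) fzero powr p)" unfolding e by (rule summable_mult[OF S])
  then show "(\<lambda>n. fsmul c (x n)) \<in> flp_space p" using fuzzy_number_fsmul[OF fz] by (simp add: flp_space_def)
  have "frho p (\<lambda>n. fzero) (\<lambda>n. fsmul c (x n)) = (c powr p * (\<Sum>n. fD (x n) fzero powr p)) powr (1 / p)"
    unfolding frho_def fD_commute[of fzero] e using suminf_mult[OF S] by simp
  also have "\<dots> = c * frho p (\<lambda>n. fzero) x"
    unfolding frho_def fD_commute[of fzero] by (rule powr_scale_root[OF c p suminf_nonneg[OF S]]) simp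
  finally show "frho p (\<lambda>n. fzero) (\<lambda>n. fsmul c (x n)) = c * frho p (\<lambda>n. fzero) x" .
qed

lemma bsmul_homogeneous:
  assumes B: "bvalid B" and y: "y \<in> bcarrier B" and c: "c > 0"
  shows "bsmul B c y \<in> bcarrier B \<and> bdist B (bzero B) (bsmul B c y) = c * bdist B (bzero B) y
    \<and> 0 \<le> bdist B (bzero B) y"
proof (cases B)
  case SpRF
  then obtain u where "y = FNum u" "fuzzy_number u" using y by auto
  then show ?thesis using SpRF c fuzzy_number_fsmul fD_fsmul_fzero fD_nonneg[OF fuzzy_number_fzero]
    by (simp add: fD_commute[of fzero])
next
  case (SpC a b)
  then obtain f where f: "y = FFun f" "f \<in> fcont_space a b" using y by auto
  moreover have "\<And>t. t \<in> {a..b} \<Longrightarrow> fuzzy_number (f t)" "fuzzy_continuous_on a b f"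
    using f(2) unfolding fcont_space_iff by auto
  ultimately show ?thesis using SpC B fcont_space_fsmul[OF c f(2)] fDstar_fzero_fsmul[OF _ c] by simp
next
  case (SpLp a b p)
  then obtain X where "y = FCls X" "X \<in> fLp_space a b p" using y by auto
  then show ?thesis using SpLp B fLp_space_fsmul[OF c] by (simp add: fDp_fun_def)
next
  case (SpCp p hk a b)
  then obtain f where "y = FFun f" "f \<in> fCp_space p hk a b" using y by auto
  then show ?thesis using SpCp B fCp_space_fsmul[OF _ c] fDpstar_fzero_fsmul[OF _ c] by simp
next
  case (Splp p)
  then obtain x where "y = FSeq x" "x \<in> flp_space p" using y by auto
  then show ?thesis using Splp B flp_space_fsmul[OF c] by (simp add: frho_def)
next
  case Spm
  then obtain x where "y = FSeq x" "x \<in> fm_space" using y by auto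
  then show ?thesis using Spm fm_space_fsmul[OF c] fmu_fzero_fsmul[OF c] by (simp add: fm_space_def)
next
  case Spc
  then obtain x where "y = FSeq x" "x \<in> fc_space" using y by auto
  then show ?thesis using Spc fc_space_fsmul[OF c] fmu_fzero_fsmul[OF c] by (simp add: fc_space_def)
next
  case Spc0
  then obtain x where "y = FSeq x" "x \<in> fc0_space" using y by auto
  then show ?thesis using Spc0 fc0_space_fsmul[OF c] fmu_fzero_fsmul[OF c] by (simp add: fc0_space_def)
qed

lemma Xsmul_0: "Xsmul S 0 x = Xzero S"
proof -
  have "bsmul B 0 y = bzero B" for B y by (cases B) simp_all
  then show ?thesis by (intro nth_equalityI) (simp_all add: Xsmul_def Xzero_def)
qed

lemma Xsmul_carrier:
  assumes "valid_spec S" "x \<in> Xcarrier S" "c > 0" shows "Xsmul S c x \<in> Xcarrier S"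
  using assms bsmul_homogeneous unfolding Xcarrier_def valid_spec_def by (auto simp: Xsmul_def)

lemma Xnorm_eq_Max:
  "Xnorm S x = Max ((\<lambda>i. bdist (S ! i) (bzero (S ! i)) (x ! i)) ` {..<length S})"
  unfolding Xnorm_def Xdist_def Xzero_def by simp

lemma Xnorm_Xsmul:
  assumes S: "valid_spec S" and x: "x \<in> Xcarrier S" and c: "c > 0"
  shows "Xnorm S (Xsmul S c x) = c * Xnorm S x"
proof -
  have "Xnorm S (Xsmul S c x) = Max ((\<lambda>t. c * t) ` (\<lambda>i. bdist (S ! i) (bzero (S ! i)) (x ! i)) ` {..<length S})"
    unfolding Xnorm_eq_Max image_image using bsmul_homogeneous S x c unfolding valid_spec_def Xcarrier_def
    by (intro arg_cong[where f = Max] image_cong) (auto simp: Xsmul_def)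
  also have "\<dots> = c * Xnorm S x"
    unfolding Xnorm_eq_Max using S c
    by (intro mono_Max_commute[symmetric]) (auto simp: mono_def valid_spec_def)
  finally show ?thesis .
qed

lemma Xnorm_nonneg:
  assumes S: "valid_spec S" and x: "x \<in> Xcarrier S" shows "0 \<le> Xnorm S x"
proof -
  have "0 < length S" using S by (simp add: valid_spec_def)
  then have "bdist (S ! 0) (bzero (S ! 0)) (x ! 0) \<le> Xnorm S x" unfolding Xnorm_eq_Max by (intro Max_ge) auto
  moreover have "0 \<le> bdist (S ! 0) (bzero (S ! 0)) (x ! 0)"
    using bsmul_homogeneous[of "S ! 0" "x ! 0" 1] S x \<open>0 < length S\<close> by (auto simp: valid_spec_def Xcarrier_def)
  ultimately show ?thesis by linarith
qed

lemma cont0_functional_iff: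
  assumes "lin_functional S A"
  shows "cont0_functional S A \<longleftrightarrow> (\<forall>e>0. \<exists>d>0. \<forall>x\<in>Xcarrier S. Xnorm S x < d \<longrightarrow> \<bar>A x\<bar> < e)"
proof -
  have "A (Xzero S) = 0" if "x \<in> Xcarrier S" for x
    using assms that Xsmul_0[of S x] unfolding lin_functional_def by (metis mult_zero_left)
  then show ?thesis unfolding cont0_functional_def Xnorm_def by auto
qed

lemma cont0_operator_iff:
  assumes "lin_operator S A"
  shows "cont0_operator S A \<longleftrightarrow> (\<forall>e>0. \<exists>d>0. \<forall>x\<in>Xcarrier S. Xnorm S x < d \<longrightarrow> Xnorm S (A x) < e)"
proof -
  have "A (Xzero S) = Xzero S" if "x \<in> Xcarrier S" for x
    using assms that Xsmul_0[of S] unfolding lin_operator_def by metis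
  then show ?thesis unfolding cont0_operator_def Xnorm_def by auto
qed

lemma lin_functional_abs_Xsmul:
  assumes "lin_functional S A" "c > 0" "x \<in> Xcarrier S"
  shows "\<bar>A (Xsmul S c x)\<bar> = c * \<bar>A x\<bar>"
  using assms by (simp add: lin_functional_def abs_mult)

lemma lin_operator_Xnorm_Xsmul:
  assumes "valid_spec S" "lin_operator S A" "c > 0" "x \<in> Xcarrier S"
  shows "Xnorm S (A (Xsmul S c x)) = c * Xnorm S (A x)"
  using assms Xnorm_Xsmul[OF assms(1)] by (simp add: lin_operator_def)

text \<open>For a positively homogeneous \<open>\<phi>\<close>, continuity at the origin gives \<open>\<phi> < 1\<close> on the
  ball of radius \<open>d\<close>; rescaling every \<open>x\<close> to norm \<open>d / 2\<close> then yields the bound with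
  \<open>M = 2 / d\<close>. Points of norm \<open>0\<close> can be rescaled arbitrarily, forcing \<open>\<phi> x \<le> 0\<close>.\<close>

lemma homogeneous_continuous_at_0_iff_bounded:
  fixes C :: "'x set" and N \<phi> :: "'x \<Rightarrow> real" and sm :: "real \<Rightarrow> 'x \<Rightarrow> 'x"
  assumes cone: "\<And>c x. c > 0 \<Longrightarrow> x \<in> C \<Longrightarrow> sm c x \<in> C"
    and N_hom: "\<And>c x. c > 0 \<Longrightarrow> x \<in> C \<Longrightarrow> N (sm c x) = c * N x"
    and N_nonneg: "\<And>x. x \<in> C \<Longrightarrow> 0 \<le> N x"
    and \<phi>_hom: "\<And>c x. c > 0 \<Longrightarrow> x \<in> C \<Longrightarrow> \<phi> (sm c x) = c * \<phi> x"
  shows "(\<forall>e>0. \<exists>d>0. \<forall>x\<in>C. N x < d \<longrightarrow> \<phi> x < e) \<longleftrightarrow> (\<exists>M>0. \<forall>x\<in>C. \<phi> x \<le> M * N x)"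
proof
  assume "\<exists>M>0. \<forall>x\<in>C. \<phi> x \<le> M * N x"
  then obtain M where M: "M > 0" "\<And>x. x \<in> C \<Longrightarrow> \<phi> x \<le> M * N x" by blast
  have "\<phi> x < e" if "e > 0" "x \<in> C" "N x < e / M" for e x
    using M(2)[OF that(2)] that(3) M(1) by (simp add: pos_less_divide_eq mult.commute)
  then show "\<forall>e>0. \<exists>d>0. \<forall>x\<in>C. N x < d \<longrightarrow> \<phi> x < e" using M(1) by (meson divide_pos_pos)
next
  assume "\<forall>e>0. \<exists>d>0. \<forall>x\<in>C. N x < d \<longrightarrow> \<phi> x < e"
  then obtain d where d: "d > 0" "\<And>x. x \<in> C \<Longrightarrow> N x < d \<Longrightarrow> \<phi> x < 1" by (meson zero_less_one)
  have "\<phi> x \<le> 2 / d * N x" if x: "x \<in> C" for x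
  proof (cases "N x = 0")
    case True
    have "\<phi> x \<le> 0"
    proof (rule ccontr)
      assume "\<not> \<phi> x \<le> 0"
      then have k: "1 / \<phi> x > 0" by simp
      have "\<phi> (sm (1 / \<phi> x) x) = 1" "N (sm (1 / \<phi> x) x) = 0"
        using \<phi>_hom[OF k x] N_hom[OF k x] True k by simp_all
      then show False using d(2)[OF cone[OF k x]] d(1) by simp
    qed
    then show ?thesis using True by simp
  next
    case False
    then have pos: "N x > 0" using N_nonneg[OF x] by simp
    define k where "k = d / (2 * N x)"
    have k: "k > 0" using pos d by (simp add: k_def)
    have "N (sm k x) < d" using N_hom[OF k x] pos d by (simp add: k_def)
    then have "k * \<phi> x < 1" using d(2)[OF cone[OF k x]] \<phi>_hom[OF k x] by simp
    then show ?thesis using k pos d by (simp add: k_def field_simps)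
  qed
  then show "\<exists>M>0. \<forall>x\<in>C. \<phi> x \<le> M * N x" using d(1) by (intro exI[of _ "2 / d"]) auto
qed

theorem theorem3p2:
  fixes S :: "bspace list"
  assumes "valid_spec S"
  shows "(\<forall>A :: felem list \<Rightarrow> real. lin_functional S A \<longrightarrow>
            (cont0_functional S A \<longleftrightarrow> (\<exists>M>0. \<forall>x\<in>Xcarrier S. \<bar>A x\<bar> \<le> M * Xnorm S x)))
       \<and> (\<forall>A :: felem list \<Rightarrow> felem list. lin_operator S A \<longrightarrow>
            (cont0_operator S A \<longleftrightarrow> (\<exists>M>0. \<forall>x\<in>Xcarrier S. Xnorm S (A x) \<le> M * Xnorm S x)))"
proof -
  note hom = homogeneous_continuous_at_0_iff_bounded[where sm = "Xsmul S", OF Xsmul_carrier[OF assms]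
      Xnorm_Xsmul[OF assms] Xnorm_nonneg[OF assms]]
  have "cont0_functional S A \<longleftrightarrow> (\<exists>M>0. \<forall>x\<in>Xcarrier S. \<bar>A x\<bar> \<le> M * Xnorm S x)"
    if lin: "lin_functional S A" for A :: "felem list \<Rightarrow> real"
    unfolding cont0_functional_iff[OF lin]
    by (rule hom) (simp_all add: lin_functional_abs_Xsmul[OF lin])
  moreover have "cont0_operator S A \<longleftrightarrow> (\<exists>M>0. \<forall>x\<in>Xcarrier S. Xnorm S (A x) \<le> M * Xnorm S x)"
    if lin: "lin_operator S A" for A :: "felem list \<Rightarrow> felem list"
    unfolding cont0_operator_iff[OF lin]
    by (rule hom) (simp_all add: lin_operator_Xnorm_Xsmul[OF assms lin])
  ultimately show ?thesis by blast
qed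

end
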